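(* Let $k$ be a field of characteristic $0$ or of characteristic greater than $7$. Let $E_1=\sum_{\nu=0}^{6}\frac{\beta^\nu}{\nu!}$ and $E_3=\sum_{\nu=0}^6\frac{3^\nu\beta^\nu}{\nu!}$ in $k[\beta]$. Then the $k$-algebra $$\Lambda=kQ/\big(\beta^7,\ \alpha\gamma,\ \alpha E_1\gamma,\ \alpha E_3\gamma\big)$$ has dimension $27$, has ordinary quiver $Q$ (which contains the loop $\beta$), and satisfies $\mathrm{HH}^1(\Lambda)=0$.
   Context: $Q$ is the quiver with vertices $1,2,3$ and arrows $\alpha\colon 2\to1$, $\beta\colon 2\to 2$, $\gamma\colon 3\to 2$; $kQ$ is generated by pairwise orthogonal idempotents $e_1,e_2,e_3$ (sum $1$) and $\alpha,\beta,\gamma$ with $e_1\alpha=\alpha=\alpha e_2$, $e_2\beta=\beta=\beta e_2$, $e_3\gamma=\gamma=\gamma e_2$, $\gamma\alpha=\beta\alpha=\gamma\beta=0$; for $v=\sum_iv_i\beta^i\in k[\beta]$, $\alpha v\gamma=\sum_iv_i\alpha\beta^i\gamma$. The displayed ideal is the two-sided ideal generated by the listed elements. $\mathrm{HH}^1(\Lambda)=\mathrm{Der}_k(\Lambda,\Lambda)/\mathrm{Inn}(\Lambda)$. *)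

theory Defs
  imports Main
begin

datatype vert = V1 | V2 | V3
datatype arr = Alpha | Beta | Gamma

fun arr_src :: "arr \<Rightarrow> vert" where
  "arr_src Alpha = V2" | "arr_src Beta = V2" | "arr_src Gamma = V3"
fun arr_tgt :: "arr \<Rightarrow> vert" where
  "arr_tgt Alpha = V1" | "arr_tgt Beta = V2" | "arr_tgt Gamma = V2"

text \<open>A nontrivial path is a list of arrows written as in the paper,
  i.e. composition from right to left: [a1,...,an] means first an, ..., last a1
  (so alpha beta^i gamma goes 3 -> 2 -> ... -> 2 -> 1).\<close>
datatype path = Triv vert | Nontriv "arr list"

fun valid_path :: "path \<Rightarrow> bool" where
  "valid_path (Triv v) = True"
| "valid_path (Nontriv xs) =
     (xs \<noteq> [] \<and> (\<forall>i. Suc i < length xs \<longrightarrow> arr_src (xs ! i) = arr_tgt (xs ! Suc i)))"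

fun path_src :: "path \<Rightarrow> vert" where
  "path_src (Triv v) = v" | "path_src (Nontriv xs) = arr_src (last xs)"
fun path_tgt :: "path \<Rightarrow> vert" where
  "path_tgt (Triv v) = v" | "path_tgt (Nontriv xs) = arr_tgt (hd xs)"

fun path_len :: "path \<Rightarrow> nat" where
  "path_len (Triv v) = 0" | "path_len (Nontriv xs) = length xs"

text \<open>Product of paths p q (q first, then p); None means the product is 0.\<close>
definition path_mult :: "path \<Rightarrow> path \<Rightarrow> path option" where
  "path_mult p q =
     (if path_src p \<noteq> path_tgt q then None
      else (case (p, q) of
              (Triv v, _) \<Rightarrow> Some q
            | (_, Triv w) \<Rightarrow> Some p
            | (Nontriv xs, Nontriv ys) \<Rightarrow> Some (Nontriv (xs @ ys))))"

text \<open>Elements of kQ: finitely supported k-valued functions on valid paths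
  (coefficients with respect to the path basis).\<close>
definition supp :: "(path \<Rightarrow> 'k::zero) \<Rightarrow> path set" where
  "supp f = {p. f p \<noteq> 0}"

definition KQ :: "(path \<Rightarrow> 'k::field) set" where
  "KQ = {f. finite (supp f) \<and> (\<forall>p. f p \<noteq> 0 \<longrightarrow> valid_path p)}"

definition kq_add :: "(path \<Rightarrow> 'k::field) \<Rightarrow> (path \<Rightarrow> 'k) \<Rightarrow> (path \<Rightarrow> 'k)" where
  "kq_add f g = (\<lambda>p. f p + g p)"
definition kq_diff :: "(path \<Rightarrow> 'k::field) \<Rightarrow> (path \<Rightarrow> 'k) \<Rightarrow> (path \<Rightarrow> 'k)" where
  "kq_diff f g = (\<lambda>p. f p - g p)"
definition kq_smult :: "'k::field \<Rightarrow> (path \<Rightarrow> 'k) \<Rightarrow> (path \<Rightarrow> 'k)" where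
  "kq_smult c f = (\<lambda>p. c * f p)"
definition kq_zero :: "path \<Rightarrow> 'k::field" where
  "kq_zero = (\<lambda>p. 0)"

definition kq_mult :: "(path \<Rightarrow> 'k::field) \<Rightarrow> (path \<Rightarrow> 'k) \<Rightarrow> (path \<Rightarrow> 'k)" where
  "kq_mult f g = (\<lambda>r. \<Sum>p\<in>supp f. \<Sum>q\<in>supp g.
                      (if path_mult p q = Some r then f p * g q else 0))"

definition bpath :: "path \<Rightarrow> (path \<Rightarrow> 'k::field)" where
  "bpath p = (\<lambda>q. if q = p then 1 else 0)"

text \<open>For v = sum_i v_i beta^i (coefficients v_0..v_n), the element alpha v gamma.\<close>
definition alpha_poly_gamma :: "(nat \<Rightarrow> 'k::field) \<Rightarrow> nat \<Rightarrow> (path \<Rightarrow> 'k)" where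
  "alpha_poly_gamma v n =
     (\<lambda>r. \<Sum>i\<le>n. v i * bpath (Nontriv (Alpha # replicate i Beta @ [Gamma])) r)"

inductive_set gen_ideal :: "(path \<Rightarrow> 'k::field) set \<Rightarrow> (path \<Rightarrow> 'k) set"
  for S :: "(path \<Rightarrow> 'k) set" where
  gi_zero: "kq_zero \<in> gen_ideal S"
| gi_gen: "s \<in> S \<Longrightarrow> s \<in> gen_ideal S"
| gi_add: "x \<in> gen_ideal S \<Longrightarrow> y \<in> gen_ideal S \<Longrightarrow> kq_add x y \<in> gen_ideal S"
| gi_lmult: "a \<in> KQ \<Longrightarrow> x \<in> gen_ideal S \<Longrightarrow> kq_mult a x \<in> gen_ideal S"
| gi_rmult: "a \<in> KQ \<Longrightarrow> x \<in> gen_ideal S \<Longrightarrow> kq_mult x a \<in> gen_ideal S"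

text \<open>dim_k (kQ/I) = n: there are n elements of kQ whose classes form a k-basis of kQ/I.\<close>
definition quot_dim_eq :: "(path \<Rightarrow> 'k::field) set \<Rightarrow> nat \<Rightarrow> bool" where
  "quot_dim_eq I n \<longleftrightarrow>
     (\<exists>b :: nat \<Rightarrow> (path \<Rightarrow> 'k). (\<forall>i<n. b i \<in> KQ) \<and>
        (\<forall>c. (\<lambda>p. \<Sum>i<n. c i * b i p) \<in> I \<longrightarrow> (\<forall>i<n. c i = 0)) \<and>
        (\<forall>f\<in>KQ. \<exists>c. kq_diff f (\<lambda>p. \<Sum>i<n. c i * b i p) \<in> I))"

text \<open>R^m: the m-th power of the arrow ideal = elements supported on paths of length >= m.\<close>
definition arrow_ideal_pow :: "nat \<Rightarrow> (path \<Rightarrow> 'k::field) set" where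
  "arrow_ideal_pow m = {f \<in> KQ. \<forall>p. f p \<noteq> 0 \<longrightarrow> m \<le> path_len p}"

text \<open>Admissible ideal: R^m contained in I contained in R^2 for some m >= 2.
  For such I, the ordinary (Gabriel) quiver of kQ/I is Q.\<close>
definition admissible_ideal :: "(path \<Rightarrow> 'k::field) set \<Rightarrow> bool" where
  "admissible_ideal I \<longleftrightarrow> I \<subseteq> arrow_ideal_pow 2 \<and> (\<exists>m\<ge>2. arrow_ideal_pow m \<subseteq> I)"

text \<open>A k-derivation of kQ/I, given on representatives: a map d on kQ that is
  well defined modulo I, k-linear modulo I and satisfies the Leibniz rule modulo I.
  Every k-derivation of kQ/I arises in this way (compose with a set-theoretic section).\<close>
definition quot_derivation :: "(path \<Rightarrow> 'k::field) set \<Rightarrow> ((path \<Rightarrow> 'k) \<Rightarrow> (path \<Rightarrow> 'k)) \<Rightarrow> bool" where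
  "quot_derivation I d \<longleftrightarrow>
     (\<forall>x\<in>KQ. d x \<in> KQ) \<and>
     (\<forall>x\<in>KQ. \<forall>y\<in>KQ. kq_diff x y \<in> I \<longrightarrow> kq_diff (d x) (d y) \<in> I) \<and>
     (\<forall>x\<in>KQ. \<forall>y\<in>KQ. kq_diff (d (kq_add x y)) (kq_add (d x) (d y)) \<in> I) \<and>
     (\<forall>c. \<forall>x\<in>KQ. kq_diff (d (kq_smult c x)) (kq_smult c (d x)) \<in> I) \<and>
     (\<forall>x\<in>KQ. \<forall>y\<in>KQ. kq_diff (d (kq_mult x y)) (kq_add (kq_mult (d x) y) (kq_mult x (d y))) \<in> I)"

definition quot_inner :: "(path \<Rightarrow> 'k::field) set \<Rightarrow> ((path \<Rightarrow> 'k) \<Rightarrow> (path \<Rightarrow> 'k)) \<Rightarrow> bool" where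
  "quot_inner I d \<longleftrightarrow>
     (\<exists>a\<in>KQ. \<forall>x\<in>KQ. kq_diff (d x) (kq_diff (kq_mult a x) (kq_mult x a)) \<in> I)"

definition HH1_vanishes :: "(path \<Rightarrow> 'k::field) set \<Rightarrow> bool" where
  "HH1_vanishes I \<longleftrightarrow> (\<forall>d. quot_derivation I d \<longrightarrow> quot_inner I d)"

end

theory Submission
  imports Defs
begin

section \<open>Paths of Q\<close>

lemma successively_conv_nth:
  "successively P xs \<longleftrightarrow> (\<forall>i. Suc i < length xs \<longrightarrow> P (xs ! i) (xs ! Suc i))"
proof (induction xs rule: induct_list012)
  case (3 x y zs)
  have "(\<forall>i. Suc i < length (x # y # zs) \<longrightarrow> P ((x # y # zs) ! i) ((x # y # zs) ! Suc i))
     \<longleftrightarrow> P x y \<and> (\<forall>i. Suc i < length (y # zs) \<longrightarrow> P ((y # zs) ! i) ((y # zs) ! Suc i))"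
    by (metis Suc_less_eq length_Cons nth_Cons_0 nth_Cons_Suc zero_less_Suc not0_implies_Suc)
  then show ?case using 3 by simp
qed auto

lemma valid_Nontriv_iff:
  "valid_path (Nontriv xs) \<longleftrightarrow> xs \<noteq> [] \<and> successively (\<lambda>x y. arr_src x = arr_tgt y) xs"
  by (simp add: successively_conv_nth)

declare valid_path.simps(2)[simp del]

definition path_B :: "nat \<Rightarrow> path" where
  "path_B n = (if n = 0 then Triv V2 else Nontriv (replicate n Beta))"
definition path_AB :: "nat \<Rightarrow> path" where
  "path_AB n = Nontriv (Alpha # replicate n Beta)"
definition path_BG :: "nat \<Rightarrow> path" where
  "path_BG n = Nontriv (replicate n Beta @ [Gamma])"
definition path_ABG :: "nat \<Rightarrow> path" where
  "path_ABG n = Nontriv (Alpha # replicate n Beta @ [Gamma])"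

lemma valid_paths [simp]:
  "valid_path (path_B n)" "valid_path (path_AB n)" "valid_path (path_BG n)" "valid_path (path_ABG n)"
  by (auto simp: valid_path.simps path_B_def path_AB_def path_BG_def path_ABG_def nth_Cons nth_append split: nat.splits)

lemma arrow_chain_cases:
  assumes "successively (\<lambda>x y. arr_src x = arr_tgt y) xs" "xs \<noteq> []"
  shows "(\<exists>n>0. xs = replicate n Beta) \<or> (\<exists>n. xs = Alpha # replicate n Beta)
       \<or> (\<exists>n. xs = replicate n Beta @ [Gamma]) \<or> (\<exists>n. xs = Alpha # replicate n Beta @ [Gamma])"
  using assms
proof (induction xs)
  case (Cons x xs)
  show ?case
  proof (cases "xs = []")
    case True
    then show ?thesis
      by (cases x) (auto intro!: exI[of _ 0] exI[of _ "Suc 0"])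
  next
    case False
    then have x: "arr_src x = arr_tgt (hd xs)" and IH: "(\<exists>n>0. xs = replicate n Beta)
       \<or> (\<exists>n. xs = Alpha # replicate n Beta) \<or> (\<exists>n. xs = replicate n Beta @ [Gamma])
       \<or> (\<exists>n. xs = Alpha # replicate n Beta @ [Gamma])"
      using Cons by (auto simp: successively_Cons)
    from IH show ?thesis
    proof (elim disjE exE conjE)
      fix n assume "0 < n" "xs = replicate n Beta"
      then show ?thesis using x
        by (cases n; cases x) (auto intro: exI[of _ n] exI[of _ "Suc n"])
    next
      fix n assume "xs = replicate n Beta @ [Gamma]"
      then show ?thesis using x
        by (cases n; cases x) (auto intro: exI[of _ n] exI[of _ "Suc n"])
    qed (use x in \<open>cases x; auto\<close>)+
  qed
qed simp

lemma valid_path_cases: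
  assumes "valid_path p"
  obtains v where "p = Triv v" | n where "p = path_B n" | n where "p = path_AB n"
    | n where "p = path_BG n" | n where "p = path_ABG n"
proof (cases p)
  case (Nontriv xs)
  then have "xs \<noteq> []" "successively (\<lambda>x y. arr_src x = arr_tgt y) xs"
    using assms by (auto simp: valid_Nontriv_iff)
  from arrow_chain_cases[OF this(2,1)] show ?thesis
    using that Nontriv unfolding path_B_def path_AB_def path_BG_def path_ABG_def
    by (metis neq0_conv)
qed (use that in blast)

lemma path_mult_Triv_left [simp]:
  "path_mult (Triv v) q = (if v = path_tgt q then Some q else None)"
  by (auto simp: path_mult_def)

lemma path_mult_Triv_right [simp]:
  "path_mult (Nontriv xs) (Triv w) = (if arr_src (last xs) = w then Some (Nontriv xs) else None)"
  by (auto simp: path_mult_def)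

lemma path_mult_Nontriv [simp]:
  "path_mult (Nontriv xs) (Nontriv ys) =
     (if arr_src (last xs) = arr_tgt (hd ys) then Some (Nontriv (xs @ ys)) else None)"
  by (auto simp: path_mult_def)

lemma path_mult_None: "path_src p \<noteq> path_tgt q \<Longrightarrow> path_mult p q = None"
  by (simp add: path_mult_def)

lemma path_mult_valid:
  "valid_path p \<Longrightarrow> valid_path q \<Longrightarrow> path_mult p q = Some r \<Longrightarrow> valid_path r"
  by (cases p; cases q) (auto simp: valid_Nontriv_iff successively_append_iff split: if_splits)

lemma path_mult_assoc:
  assumes "valid_path p" "valid_path q" "valid_path t"
  shows "Option.bind (path_mult p q) (\<lambda>u. path_mult u t) = Option.bind (path_mult q t) (path_mult p)"
  using assms by (cases p; cases q; cases t) (auto simp: valid_Nontriv_iff split: if_splits)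

definition beta_count :: "path \<Rightarrow> nat" where
  "beta_count p = (case p of Triv v \<Rightarrow> 0 | Nontriv xs \<Rightarrow> count_list xs Beta)"

lemma path_mult_beta_count: "path_mult p q = Some r \<Longrightarrow> beta_count r = beta_count p + beta_count q"
  by (cases p; cases q) (auto simp: beta_count_def split: if_splits)

lemma beta_count_paths [simp]:
  "beta_count (Triv v) = 0" "beta_count (path_B n) = n" "beta_count (path_AB n) = n"
  "beta_count (path_BG n) = n" "beta_count (path_ABG n) = n"
  by (induction n) (auto simp: beta_count_def path_B_def path_AB_def path_BG_def path_ABG_def)

lemma path_len_paths [simp]:
  "path_len (path_B n) = n" "path_len (path_AB n) = Suc n" "path_len (path_BG n) = Suc n"
  "path_len (path_ABG n) = Suc (Suc n)"
  by (simp_all add: path_B_def path_AB_def path_BG_def path_ABG_def)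

lemma path_tgt_paths [simp]:
  "path_tgt (path_B n) = V2" "path_tgt (path_AB n) = V1" "path_tgt (path_BG n) = V2"
  "path_tgt (path_ABG n) = V1"
  by (cases n; simp add: path_B_def path_AB_def path_BG_def path_ABG_def)+

lemma path_src_paths [simp]:
  "path_src (path_B n) = V2" "path_src (path_AB n) = V2" "path_src (path_BG n) = V3"
  "path_src (path_ABG n) = V3"
  by (cases n; simp add: path_B_def path_AB_def path_BG_def path_ABG_def)+

lemma path_inject [simp]:
  "path_B n = path_B m \<longleftrightarrow> n = m" "path_AB n = path_AB m \<longleftrightarrow> n = m"
  "path_BG n = path_BG m \<longleftrightarrow> n = m" "path_ABG n = path_ABG m \<longleftrightarrow> n = m"
  by (metis beta_count_paths)+

lemma path_distinct [simp]:
  "path_B n \<noteq> path_AB m" "path_B n \<noteq> path_BG m" "path_B n \<noteq> path_ABG m"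
  "path_AB n \<noteq> path_BG m" "path_AB n \<noteq> path_ABG m" "path_BG n \<noteq> path_ABG m"
  "path_AB n \<noteq> Triv v" "path_BG n \<noteq> Triv v" "path_ABG n \<noteq> Triv v"
  by (metis path_src_paths path_tgt_paths vert.distinct path.distinct(1)
        path_AB_def path_BG_def path_ABG_def)+

lemmas path_distinct' [simp] = path_distinct[THEN not_sym]

lemma path_B_eq_Triv_iff [simp]:
  "path_B n = Triv v \<longleftrightarrow> n = 0 \<and> v = V2" "Triv v = path_B n \<longleftrightarrow> n = 0 \<and> v = V2"
  by (auto simp: path_B_def)

lemma path_mult_B_B: "path_mult (path_B i) (path_B j) = Some (path_B (i + j))"
  by (cases "i = 0"; cases "j = 0") (auto simp: path_B_def hd_replicate last_replicate replicate_add)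

lemma path_mult_AB_B: "path_mult (path_AB i) (path_B j) = Some (path_AB (i + j))"
  by (cases "i = 0"; cases "j = 0")
    (auto simp: path_B_def path_AB_def hd_replicate last_replicate replicate_add)

lemma path_mult_B_BG: "path_mult (path_B i) (path_BG j) = Some (path_BG (i + j))"
  by (cases "i = 0"; cases "j = 0")
    (auto simp: path_B_def path_BG_def hd_replicate last_replicate replicate_add)

lemma path_mult_AB_BG: "path_mult (path_AB i) (path_BG j) = Some (path_ABG (i + j))"
  by (cases "i = 0"; cases "j = 0")
    (auto simp: path_AB_def path_BG_def path_ABG_def hd_replicate last_replicate replicate_add)

lemma path_mult_into_ABG_left:
  "valid_path p \<Longrightarrow> path_mult p (path_ABG n) = Some r \<Longrightarrow> p = Triv V1 \<and> r = path_ABG n"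
  by (cases p rule: valid_path_cases)
    (auto simp: path_mult_def path_AB_def path_BG_def path_ABG_def split: if_splits)

lemma path_mult_into_ABG_right:
  "valid_path q \<Longrightarrow> path_mult (path_ABG n) q = Some r \<Longrightarrow> q = Triv V3 \<and> r = path_ABG n"
  by (cases q rule: valid_path_cases)
    (auto simp: path_mult_def path_B_def path_AB_def path_BG_def path_ABG_def hd_append
      split: if_splits)

section \<open>The path algebra as a ring\<close>

lemma KQ_finite_supp: "f \<in> KQ \<Longrightarrow> finite (supp f)"
  by (simp add: KQ_def)

lemma KQ_valid: "f \<in> KQ \<Longrightarrow> f p \<noteq> 0 \<Longrightarrow> valid_path p"
  by (simp add: KQ_def)

lemma KQ_intro:
  assumes "supp f \<subseteq> A" "finite A" "\<And>p. p \<in> A \<Longrightarrow> valid_path p"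
  shows "f \<in> KQ"
  using assms finite_subset by (fastforce simp: KQ_def supp_def)

lemma kq_mult_eq_sum:
  assumes "finite A" "finite B" "supp f \<subseteq> A" "supp g \<subseteq> B"
  shows "kq_mult f g r = (\<Sum>p\<in>A. \<Sum>q\<in>B. if path_mult p q = Some r then f p * g q else 0)"
proof -
  have "kq_mult f g r = (\<Sum>p\<in>A. \<Sum>q\<in>supp g. if path_mult p q = Some r then f p * g q else 0)"
    unfolding kq_mult_def
    by (rule sum.mono_neutral_left[OF assms(1,3)])
      (auto simp: supp_def intro!: sum.neutral split: if_splits)
  also have "\<dots> = (\<Sum>p\<in>A. \<Sum>q\<in>B. if path_mult p q = Some r then f p * g q else 0)"
    by (intro sum.cong refl sum.mono_neutral_left[OF assms(2,4)]) (auto simp: supp_def)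
  finally show ?thesis .
qed

lemma kq_mult_nonzero:
  assumes "kq_mult f g r \<noteq> 0"
  obtains p q where "f p \<noteq> 0" "g q \<noteq> 0" "path_mult p q = Some r"
proof -
  from assms obtain p where "p \<in> supp f" and
    "(\<Sum>q\<in>supp g. if path_mult p q = Some r then f p * g q else 0) \<noteq> 0"
    unfolding kq_mult_def using sum.not_neutral_contains_not_neutral by blast
  then obtain q where "q \<in> supp g" "(if path_mult p q = Some r then f p * g q else 0) \<noteq> 0"
    using sum.not_neutral_contains_not_neutral by blast
  with that show ?thesis by (auto split: if_splits)
qed

lemma kq_mult_eq_0:
  "(\<And>p q. f p \<noteq> 0 \<Longrightarrow> g q \<noteq> 0 \<Longrightarrow> path_mult p q \<noteq> Some r) \<Longrightarrow> kq_mult f g r = 0"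
  by (metis kq_mult_nonzero)

lemma kq_mult_single:
  assumes "finite (supp f)" "finite (supp g)" "path_mult p0 q0 = Some r"
    and "\<And>p q. f p \<noteq> 0 \<Longrightarrow> g q \<noteq> 0 \<Longrightarrow> path_mult p q = Some r \<Longrightarrow> p = p0 \<and> q = q0"
  shows "kq_mult f g r = f p0 * g q0"
proof -
  have "kq_mult f g r = (\<Sum>p\<in>insert p0 (supp f). \<Sum>q\<in>insert q0 (supp g).
          if path_mult p q = Some r then f p * g q else 0)"
    by (rule kq_mult_eq_sum) (use assms in auto)
  also have "\<dots> = (\<Sum>p\<in>insert p0 (supp f). \<Sum>q\<in>insert q0 (supp g).
          if p = p0 then if q = q0 then f p0 * g q0 else 0 else 0)"
    using assms(3,4) by (intro sum.cong refl) (auto simp: supp_def)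
  also have "\<dots> = (\<Sum>p\<in>insert p0 (supp f). if p = p0 then f p0 * g q0 else 0)"
    by (intro sum.cong refl) (simp add: sum.delta assms(2))
  also have "\<dots> = f p0 * g q0"
    using assms(1) by (simp add: sum.delta)
  finally show ?thesis .
qed

definition path_products :: "path set \<Rightarrow> path set \<Rightarrow> path set" where
  "path_products A B = {r. \<exists>p\<in>A. \<exists>q\<in>B. path_mult p q = Some r}"

lemma finite_path_products: "finite A \<Longrightarrow> finite B \<Longrightarrow> finite (path_products A B)"
proof -
  assume "finite A" "finite B"
  moreover have "path_products A B \<subseteq> (\<lambda>(p, q). the (path_mult p q)) ` (A \<times> B)"
    unfolding path_products_def by force
  ultimately show ?thesis by (meson finite_SigmaI finite_imageI finite_subset)
qed

lemma supp_kq_mult: "supp (kq_mult f g) \<subseteq> path_products (supp f) (supp g)"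
  by (auto simp: supp_def path_products_def elim!: kq_mult_nonzero)

lemma KQ_mult:
  assumes "f \<in> KQ" "g \<in> KQ"
  shows "kq_mult f g \<in> KQ"
proof (rule KQ_intro[OF supp_kq_mult])
  show "finite (path_products (supp f) (supp g))"
    using assms by (simp add: KQ_finite_supp finite_path_products)
  show "valid_path r" if "r \<in> path_products (supp f) (supp g)" for r
    using that assms by (auto simp: KQ_def supp_def path_products_def intro: path_mult_valid)
qed

lemma sum_swap_outer:
  "(\<Sum>u\<in>U. \<Sum>p\<in>A. \<Sum>q\<in>B. F u p q) = (\<Sum>p\<in>A. \<Sum>q\<in>B. \<Sum>u\<in>U. F u p q)"
  by (rule trans[OF sum.swap], rule sum.cong[OF refl], rule sum.swap)

lemma sum_swap_outer2:
  "(\<Sum>u\<in>U. \<Sum>t\<in>C. \<Sum>p\<in>A. \<Sum>q\<in>B. F u t p q) = (\<Sum>p\<in>A. \<Sum>q\<in>B. \<Sum>t\<in>C. \<Sum>u\<in>U. F u t p q)"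
proof -
  have "(\<Sum>u\<in>U. \<Sum>t\<in>C. \<Sum>p\<in>A. \<Sum>q\<in>B. F u t p q) = (\<Sum>u\<in>U. \<Sum>p\<in>A. \<Sum>q\<in>B. \<Sum>t\<in>C. F u t p q)"
    by (rule sum.cong[OF refl], rule sum_swap_outer)
  also have "\<dots> = (\<Sum>p\<in>A. \<Sum>q\<in>B. \<Sum>u\<in>U. \<Sum>t\<in>C. F u t p q)"
    by (rule sum_swap_outer)
  also have "\<dots> = (\<Sum>p\<in>A. \<Sum>q\<in>B. \<Sum>t\<in>C. \<Sum>u\<in>U. F u t p q)"
    by (rule sum.cong[OF refl], rule sum.cong[OF refl], rule sum.swap)
  finally show ?thesis .
qed

lemma sum_if_Some_collapse:
  assumes "finite U" "\<And>u. x = Some u \<Longrightarrow> u \<in> U"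
  shows "(\<Sum>u\<in>U. if x = Some u \<and> y u = Some r then c else 0)
       = (if Option.bind x y = Some r then c else 0)"
proof (cases x)
  case (Some u0)
  then have "(\<Sum>u\<in>U. if x = Some u \<and> y u = Some r then c else 0)
      = (\<Sum>u\<in>U. if u = u0 then (if y u0 = Some r then c else 0) else 0)"
    by (intro sum.cong) auto
  with assms Some show ?thesis by (simp add: sum.delta)
qed simp

lemma kq_mult_assoc_left:
  assumes f: "f \<in> KQ" and g: "g \<in> KQ" and h: "h \<in> KQ"
  shows "kq_mult (kq_mult f g) h r = (\<Sum>p\<in>supp f. \<Sum>q\<in>supp g. \<Sum>t\<in>supp h.
     if Option.bind (path_mult p q) (\<lambda>u. path_mult u t) = Some r then f p * g q * h t else 0)"
proof -
  define U where "U = path_products (supp f) (supp g)"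
  have fin: "finite (supp f)" "finite (supp g)" "finite (supp h)" "finite U"
    using f g h by (auto simp: KQ_finite_supp U_def finite_path_products)
  have "kq_mult (kq_mult f g) h r = (\<Sum>u\<in>U. \<Sum>t\<in>supp h.
      if path_mult u t = Some r then kq_mult f g u * h t else 0)"
    using fin supp_kq_mult by (intro kq_mult_eq_sum) (auto simp: U_def)
  also have "\<dots> = (\<Sum>u\<in>U. \<Sum>t\<in>supp h. \<Sum>p\<in>supp f. \<Sum>q\<in>supp g.
      if path_mult p q = Some u \<and> path_mult u t = Some r then f p * g q * h t else 0)"
    by (intro sum.cong refl) (auto simp: kq_mult_def sum_distrib_right intro!: sum.cong)
  also have "\<dots> = (\<Sum>p\<in>supp f. \<Sum>q\<in>supp g. \<Sum>t\<in>supp h. \<Sum>u\<in>U.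
      if path_mult p q = Some u \<and> path_mult u t = Some r then f p * g q * h t else 0)"
    by (rule sum_swap_outer2)
  also have "\<dots> = (\<Sum>p\<in>supp f. \<Sum>q\<in>supp g. \<Sum>t\<in>supp h.
     if Option.bind (path_mult p q) (\<lambda>u. path_mult u t) = Some r then f p * g q * h t else 0)"
    using fin by (intro sum.cong refl sum_if_Some_collapse) (auto simp: U_def path_products_def)
  finally show ?thesis .
qed

lemma kq_mult_assoc_right:
  assumes f: "f \<in> KQ" and g: "g \<in> KQ" and h: "h \<in> KQ"
  shows "kq_mult f (kq_mult g h) r = (\<Sum>p\<in>supp f. \<Sum>q\<in>supp g. \<Sum>t\<in>supp h.
     if Option.bind (path_mult q t) (path_mult p) = Some r then f p * g q * h t else 0)"
proof -
  define V where "V = path_products (supp g) (supp h)"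
  have fin: "finite (supp f)" "finite (supp g)" "finite (supp h)" "finite V"
    using f g h by (auto simp: KQ_finite_supp V_def finite_path_products)
  have "kq_mult f (kq_mult g h) r = (\<Sum>p\<in>supp f. \<Sum>v\<in>V.
      if path_mult p v = Some r then f p * kq_mult g h v else 0)"
    using fin supp_kq_mult by (intro kq_mult_eq_sum) (auto simp: V_def)
  also have "\<dots> = (\<Sum>p\<in>supp f. \<Sum>v\<in>V. \<Sum>q\<in>supp g. \<Sum>t\<in>supp h.
      if path_mult q t = Some v \<and> path_mult p v = Some r then f p * g q * h t else 0)"
    by (intro sum.cong refl) (auto simp: kq_mult_def sum_distrib_left mult.assoc intro!: sum.cong)
  also have "\<dots> = (\<Sum>p\<in>supp f. \<Sum>q\<in>supp g. \<Sum>t\<in>supp h. \<Sum>v\<in>V.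
      if path_mult q t = Some v \<and> path_mult p v = Some r then f p * g q * h t else 0)"
    by (rule sum.cong[OF refl], rule sum_swap_outer)
  also have "\<dots> = (\<Sum>p\<in>supp f. \<Sum>q\<in>supp g. \<Sum>t\<in>supp h.
     if Option.bind (path_mult q t) (path_mult p) = Some r then f p * g q * h t else 0)"
    using fin by (intro sum.cong refl sum_if_Some_collapse) (auto simp: V_def path_products_def)
  finally show ?thesis .
qed

lemma kq_mult_assoc:
  assumes "f \<in> KQ" "g \<in> KQ" "h \<in> KQ"
  shows "kq_mult (kq_mult f g) h = kq_mult f (kq_mult g h)"
proof
  fix r
  show "kq_mult (kq_mult f g) h r = kq_mult f (kq_mult g h) r"
    unfolding kq_mult_assoc_left[OF assms] kq_mult_assoc_right[OF assms]
    using assms by (intro sum.cong refl) (simp add: path_mult_assoc KQ_valid supp_def)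
qed

definition kq_one :: "path \<Rightarrow> 'k::field" where
  "kq_one p = (case p of Triv v \<Rightarrow> 1 | Nontriv xs \<Rightarrow> 0)"

lemma KQ_zero: "kq_zero \<in> KQ"
  by (simp add: KQ_def kq_zero_def supp_def)

lemma UNIV_vert: "(UNIV :: vert set) = {V1, V2, V3}"
  using vert.exhaust by auto

lemma KQ_one: "kq_one \<in> KQ"
proof (rule KQ_intro)
  show "supp kq_one \<subseteq> Triv ` UNIV"
    by (clarsimp simp: supp_def kq_one_def split: path.splits) (metis path.exhaust rangeI)
qed (auto simp: UNIV_vert)

lemma KQ_add: "f \<in> KQ \<Longrightarrow> g \<in> KQ \<Longrightarrow> kq_add f g \<in> KQ"
  by (rule KQ_intro[of _ "supp f \<union> supp g"]) (auto simp: kq_add_def supp_def KQ_def)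

lemma KQ_uminus: "f \<in> KQ \<Longrightarrow> (\<lambda>p. - f p) \<in> KQ"
  by (simp add: KQ_def supp_def)

lemma KQ_diff: "f \<in> KQ \<Longrightarrow> g \<in> KQ \<Longrightarrow> kq_diff f g \<in> KQ"
  by (rule KQ_intro[of _ "supp f \<union> supp g"]) (auto simp: kq_diff_def supp_def KQ_def)

lemma KQ_smult: "f \<in> KQ \<Longrightarrow> kq_smult c f \<in> KQ"
  by (rule KQ_intro[of _ "supp f"]) (auto simp: kq_smult_def supp_def KQ_def)

lemma KQ_bpath: "valid_path p \<Longrightarrow> bpath p \<in> KQ"
  by (rule KQ_intro[of _ "{p}"]) (auto simp: bpath_def supp_def)

lemma path_mult_Triv_right_Some: "path_mult p (Triv w) = Some r \<Longrightarrow> r = p \<and> w = path_src p"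
  by (cases p) (auto split: if_splits)

lemma kq_smult_one_mult:
  assumes g: "g \<in> KQ"
  shows "kq_mult (kq_smult c kq_one) g = kq_smult c g"
proof
  fix r
  have "kq_mult (kq_smult c kq_one) g r = kq_smult c kq_one (Triv (path_tgt r)) * g r"
  proof (rule kq_mult_single)
    show "finite (supp (kq_smult c kq_one))" "finite (supp g)"
      using g by (simp_all add: KQ_finite_supp KQ_smult KQ_one)
    fix p q assume "kq_smult c kq_one p \<noteq> 0" "path_mult p q = Some r"
    then show "p = Triv (path_tgt r) \<and> q = r"
      by (auto simp: kq_smult_def kq_one_def split: path.splits if_splits)
  qed simp
  then show "kq_mult (kq_smult c kq_one) g r = kq_smult c g r"
    by (simp add: kq_one_def kq_smult_def)
qed

lemma kq_mult_smult_one: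
  assumes g: "g \<in> KQ"
  shows "kq_mult g (kq_smult c kq_one) = kq_smult c g"
proof
  fix r
  have "kq_mult g (kq_smult c kq_one) r = g r * kq_smult c kq_one (Triv (path_src r))"
  proof (rule kq_mult_single)
    show "finite (supp g)" "finite (supp (kq_smult c kq_one))"
      using g by (simp_all add: KQ_finite_supp KQ_smult KQ_one)
    show "path_mult r (Triv (path_src r)) = Some r"
      by (cases r) auto
    fix p q assume "kq_smult c kq_one q \<noteq> 0" "path_mult p q = Some r"
    then show "p = r \<and> q = Triv (path_src r)"
      by (auto simp: kq_smult_def kq_one_def split: path.splits dest: path_mult_Triv_right_Some)
  qed
  then show "kq_mult g (kq_smult c kq_one) r = kq_smult c g r"
    by (simp add: kq_one_def kq_smult_def)
qed

lemma kq_smult_1: "kq_smult 1 f = f"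
  by (simp add: kq_smult_def)

lemma kq_add_mult:
  assumes "f \<in> KQ" "g \<in> KQ" "h \<in> KQ"
  shows "kq_mult (kq_add f g) h = kq_add (kq_mult f h) (kq_mult g h)"
proof
  fix r
  have fin: "finite (supp f \<union> supp g)" "finite (supp h)"
    using assms by (auto simp: KQ_finite_supp)
  have "supp (kq_add f g) \<subseteq> supp f \<union> supp g"
    by (auto simp: supp_def kq_add_def)
  then have "kq_mult (kq_add f g) h r = (\<Sum>p\<in>supp f \<union> supp g. \<Sum>q\<in>supp h.
      (if path_mult p q = Some r then f p * h q else 0) + (if path_mult p q = Some r then g p * h q else 0))"
    by (subst kq_mult_eq_sum[OF fin]) (auto simp: kq_add_def distrib_right intro!: sum.cong)
  also have "\<dots> = kq_add (kq_mult f h) (kq_mult g h) r"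
    by (simp add: kq_mult_eq_sum[OF fin] kq_add_def sum.distrib)
  finally show "kq_mult (kq_add f g) h r = kq_add (kq_mult f h) (kq_mult g h) r" .
qed

lemma kq_mult_add:
  assumes "f \<in> KQ" "g \<in> KQ" "h \<in> KQ"
  shows "kq_mult h (kq_add f g) = kq_add (kq_mult h f) (kq_mult h g)"
proof
  fix r
  have fin: "finite (supp h)" "finite (supp f \<union> supp g)"
    using assms by (auto simp: KQ_finite_supp)
  have "supp (kq_add f g) \<subseteq> supp f \<union> supp g"
    by (auto simp: supp_def kq_add_def)
  then have "kq_mult h (kq_add f g) r = (\<Sum>p\<in>supp h. \<Sum>q\<in>supp f \<union> supp g.
      (if path_mult p q = Some r then h p * f q else 0) + (if path_mult p q = Some r then h p * g q else 0))"
    by (subst kq_mult_eq_sum[OF fin]) (auto simp: kq_add_def distrib_left intro!: sum.cong)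
  also have "\<dots> = kq_add (kq_mult h f) (kq_mult h g) r"
    by (simp add: kq_mult_eq_sum[OF fin] kq_add_def sum.distrib)
  finally show "kq_mult h (kq_add f g) r = kq_add (kq_mult h f) (kq_mult h g) r" .
qed

typedef (overloaded) 'k path_alg = "KQ :: (path \<Rightarrow> 'k::field) set"
  morphisms coeffs Abs_path_alg
  using KQ_zero by blast

setup_lifting type_definition_path_alg

instantiation path_alg :: (field) ring_1
begin

lift_definition zero_path_alg :: "'a path_alg" is kq_zero by (rule KQ_zero)
lift_definition one_path_alg :: "'a path_alg" is kq_one by (rule KQ_one)
lift_definition plus_path_alg :: "'a path_alg \<Rightarrow> 'a path_alg \<Rightarrow> 'a path_alg" is kq_add
  by (rule KQ_add)
lift_definition minus_path_alg :: "'a path_alg \<Rightarrow> 'a path_alg \<Rightarrow> 'a path_alg" is kq_diff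
  by (rule KQ_diff)
lift_definition uminus_path_alg :: "'a path_alg \<Rightarrow> 'a path_alg" is "\<lambda>f p. - f p"
  by (rule KQ_uminus)
lift_definition times_path_alg :: "'a path_alg \<Rightarrow> 'a path_alg \<Rightarrow> 'a path_alg" is kq_mult
  by (rule KQ_mult)

instance
proof
  fix a b c :: "'a path_alg"
  show "a + b + c = a + (b + c)" by transfer (simp add: kq_add_def add.assoc)
  show "a + b = b + a" by transfer (simp add: kq_add_def add.commute)
  show "0 + a = a" by transfer (simp add: kq_add_def kq_zero_def)
  show "- a + a = 0" by transfer (simp add: kq_add_def kq_zero_def)
  show "a - b = a + - b" by transfer (simp add: kq_add_def kq_diff_def)
  show "a * b * c = a * (b * c)" by transfer (rule kq_mult_assoc)
  show "(a + b) * c = a * c + b * c" by transfer (rule kq_add_mult)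
  show "a * (b + c) = a * b + a * c" by transfer (rule kq_mult_add)
  show "1 * a = a" by transfer (metis kq_smult_one_mult kq_smult_1)
  show "a * 1 = a" by transfer (metis kq_mult_smult_one kq_smult_1)
  show "(0::'a path_alg) \<noteq> 1"
    by transfer (auto simp: kq_zero_def kq_one_def fun_eq_iff intro!: exI[of _ "Triv V1"])
qed

end

section \<open>The relations\<close>

lemma KQ_expand:
  assumes "f \<in> KQ"
  shows "f = (\<lambda>r. \<Sum>p\<in>supp f. f p * bpath p r)"
proof
  fix r
  have "(\<Sum>p\<in>supp f. f p * bpath p r) = (\<Sum>p\<in>supp f. if p = r then f r else 0)"
    by (intro sum.cong) (auto simp: bpath_def)
  then show "f r = (\<Sum>p\<in>supp f. f p * bpath p r)"
    using KQ_finite_supp[OF assms] by (simp add: sum.delta' supp_def)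
qed

lemma kq_mult_bpath:
  assumes "valid_path p" "valid_path q"
  shows "kq_mult (bpath p) (bpath q) = (case path_mult p q of None \<Rightarrow> kq_zero | Some r \<Rightarrow> bpath r)"
proof
  fix s
  show "kq_mult (bpath p) (bpath q) s = (case path_mult p q of None \<Rightarrow> kq_zero | Some r \<Rightarrow> bpath r) s"
  proof (cases "path_mult p q = Some s")
    case True
    then have "kq_mult (bpath p) (bpath q) s = bpath p p * bpath q q"
      by (intro kq_mult_single) (auto simp: bpath_def supp_def split: if_splits)
    with True show ?thesis by (simp add: bpath_def)
  next
    case False
    then have "kq_mult (bpath p) (bpath q) s = 0"
      by (intro kq_mult_eq_0) (auto simp: bpath_def split: if_splits)
    with False show ?thesis
      by (auto simp: bpath_def kq_zero_def split: option.splits)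
  qed
qed

lemma kq_mult_bpath_Some:
  "valid_path p \<Longrightarrow> valid_path q \<Longrightarrow> path_mult p q = Some r \<Longrightarrow> kq_mult (bpath p) (bpath q) = bpath r"
  by (simp add: kq_mult_bpath)

lemma of_nat_neq_0_le_7:
  assumes char: "CHAR('k::field) = 0 \<or> 7 < CHAR('k)" and "0 < n" "n \<le> 7"
  shows "(of_nat n :: 'k) \<noteq> 0"
  using assms by (auto simp: of_nat_eq_0_iff_char_dvd dest: dvd_imp_le)

lemma smooth_numeral_neq_0:
  assumes char: "CHAR('k::field) = 0 \<or> 7 < CHAR('k)"
  shows "(of_nat (2 ^ a * 3 ^ b * 5 ^ c * 7 ^ d) :: 'k) \<noteq> 0"
  using of_nat_neq_0_le_7[OF char, of 2] of_nat_neq_0_le_7[OF char, of 3]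
    of_nat_neq_0_le_7[OF char, of 5] of_nat_neq_0_le_7[OF char, of 7]
  by simp

lemma fact_neq_0:
  assumes char: "CHAR('k::field) = 0 \<or> 7 < CHAR('k)" and "m \<le> 7"
  shows "(of_nat (fact m) :: 'k) \<noteq> 0"
proof -
  have "(of_nat (Suc i) :: 'k) \<noteq> 0" if "i < m" for i
    using that assms(2) of_nat_neq_0_le_7[OF char, of "Suc i"] by simp
  then show ?thesis
    by (simp add: fact_prod_Suc of_nat_prod prod_zero_iff del: of_nat_Suc)
qed

definition short_path :: "path \<Rightarrow> bool" where
  "short_path p \<longleftrightarrow> valid_path p \<and> beta_count p \<le> 6 \<and> (\<forall>n. p \<noteq> path_ABG n)"

text \<open>The forms \<open>rel_form m\<close>, \<open>3 \<le> m \<le> 6\<close>, vanish on the coefficient vectors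
  \<open>(1 / i!)\<^sub>i\<close> and \<open>(3\<^sup>i / i!)\<^sub>i\<close> of \<open>\<alpha>E\<^sub>1\<gamma>\<close> and \<open>\<alpha>E\<^sub>3\<gamma>\<close> and are linearly independent;
  so on the span of the paths \<open>\<alpha>\<beta>\<^sup>i\<gamma>\<close>, \<open>1 \<le> i \<le> 6\<close>, they cut out exactly the span of
  these two relations.\<close>

definition rel_form :: "nat \<Rightarrow> (path \<Rightarrow> 'k::field) \<Rightarrow> 'k" where
  "rel_form m f = 6 * of_nat (fact m) * f (path_ABG m) - (9 - 3 ^ m) * f (path_ABG 1)
     - 2 * (3 ^ m - 3) * f (path_ABG 2)"

definition rel_ideal :: "(path \<Rightarrow> 'k::field) set" where
  "rel_ideal = {f \<in> KQ. (\<forall>p. short_path p \<longrightarrow> f p = 0) \<and> (\<forall>m\<in>{3..6}. rel_form m f = 0)}"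

lemma short_path_factors:
  assumes "valid_path p" "valid_path q" "path_mult p q = Some r" "short_path r"
  shows "short_path p \<and> short_path q"
proof -
  have "p \<noteq> path_ABG n" for n
  proof
    assume "p = path_ABG n"
    then have "r = path_ABG n" using path_mult_into_ABG_right[OF assms(2)] assms(3) by blast
    with assms(4) show False by (simp add: short_path_def)
  qed
  moreover have "q \<noteq> path_ABG n" for n
  proof
    assume "q = path_ABG n"
    then have "r = path_ABG n" using path_mult_into_ABG_left[OF assms(1)] assms(3) by blast
    with assms(4) show False by (simp add: short_path_def)
  qed
  ultimately show ?thesis
    using assms path_mult_beta_count[OF assms(3)] by (auto simp: short_path_def)
qed

lemma path_mult_eq_ABG:
  assumes "valid_path p" "valid_path q" "path_mult p q = Some (path_ABG k)" "k \<le> 6"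
    and "\<not> short_path q"
  shows "p = Triv V1 \<and> q = path_ABG k"
proof -
  have "beta_count q \<le> 6"
    using path_mult_beta_count[OF assms(3)] assms(4) by simp
  then obtain n where "q = path_ABG n"
    using assms(2,5) by (auto simp: short_path_def)
  with path_mult_into_ABG_left[OF assms(1), of n "path_ABG k"] assms(3) show ?thesis by simp
qed

lemma path_mult_eq_ABG':
  assumes "valid_path p" "valid_path q" "path_mult p q = Some (path_ABG k)" "k \<le> 6"
    and "\<not> short_path p"
  shows "p = path_ABG k \<and> q = Triv V3"
proof -
  have "beta_count p \<le> 6"
    using path_mult_beta_count[OF assms(3)] assms(4) by simp
  then obtain n where "p = path_ABG n"
    using assms(1,5) by (auto simp: short_path_def)
  with path_mult_into_ABG_right[OF assms(2), of n "path_ABG k"] assms(3) show ?thesis by simp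
qed

lemma rel_form_add: "rel_form m (kq_add f g) = rel_form m f + rel_form m g"
  by (simp add: rel_form_def kq_add_def algebra_simps)

lemma rel_form_diff: "rel_form m (kq_diff f g) = rel_form m f - rel_form m g"
  by (simp add: rel_form_def kq_diff_def algebra_simps)

lemma rel_form_smult: "rel_form m (kq_smult c f) = c * rel_form m f"
  by (simp add: rel_form_def kq_smult_def algebra_simps)

lemma rel_ideal_add: "f \<in> rel_ideal \<Longrightarrow> g \<in> rel_ideal \<Longrightarrow> kq_add f g \<in> rel_ideal"
  by (simp add: rel_ideal_def KQ_add rel_form_add) (simp add: kq_add_def)

lemma rel_ideal_diff: "f \<in> rel_ideal \<Longrightarrow> g \<in> rel_ideal \<Longrightarrow> kq_diff f g \<in> rel_ideal"
  by (simp add: rel_ideal_def KQ_diff rel_form_diff) (simp add: kq_diff_def)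

lemma rel_ideal_zero: "kq_zero \<in> rel_ideal"
  by (simp add: rel_ideal_def KQ_zero) (simp add: kq_zero_def rel_form_def)

lemma rel_ideal_mult_left:
  assumes a: "a \<in> KQ" and x: "x \<in> rel_ideal"
  shows "kq_mult a x \<in> rel_ideal"
proof -
  have xK: "x \<in> KQ" and x0: "\<And>p. short_path p \<Longrightarrow> x p = 0"
    using x by (auto simp: rel_ideal_def)
  have short: "kq_mult a x r = 0" if "short_path r" for r
    using that a xK x0 by (intro kq_mult_eq_0) (metis KQ_valid short_path_factors)
  have "kq_mult a x (path_ABG k) = a (Triv V1) * x (path_ABG k)" if "k \<le> 6" for k
    using a xK x0 that
    by (intro kq_mult_single) (auto simp: KQ_finite_supp dest: path_mult_eq_ABG[OF KQ_valid KQ_valid])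
  then have "rel_form m (kq_mult a x) = a (Triv V1) * rel_form m x" if "m \<in> {3..6}" for m
    using that by (simp add: rel_form_def algebra_simps)
  with x short KQ_mult[OF a xK] show ?thesis
    by (simp add: rel_ideal_def)
qed

lemma rel_ideal_mult_right:
  assumes a: "a \<in> KQ" and x: "x \<in> rel_ideal"
  shows "kq_mult x a \<in> rel_ideal"
proof -
  have xK: "x \<in> KQ" and x0: "\<And>p. short_path p \<Longrightarrow> x p = 0"
    using x by (auto simp: rel_ideal_def)
  have short: "kq_mult x a r = 0" if "short_path r" for r
    using that a xK x0 by (intro kq_mult_eq_0) (metis KQ_valid short_path_factors)
  have "kq_mult x a (path_ABG k) = x (path_ABG k) * a (Triv V3)" if "k \<le> 6" for k
    using a xK x0 that
    by (intro kq_mult_single)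
      (auto simp: KQ_finite_supp path_ABG_def dest: path_mult_eq_ABG'[OF KQ_valid KQ_valid])
  then have "rel_form m (kq_mult x a) = rel_form m x * a (Triv V3)" if "m \<in> {3..6}" for m
    using that by (simp add: rel_form_def algebra_simps)
  with x short KQ_mult[OF xK a] show ?thesis
    by (simp add: rel_ideal_def)
qed

definition relations :: "(path \<Rightarrow> 'k::field) set" where
  "relations =
     { bpath (Nontriv (replicate 7 Beta)),
       bpath (Nontriv [Alpha, Gamma]),
       alpha_poly_gamma (\<lambda>\<nu>. 1 / of_nat (fact \<nu>)) 6,
       alpha_poly_gamma (\<lambda>\<nu>. 3 ^ \<nu> / of_nat (fact \<nu>)) 6 }"

lemma relation_paths: "Nontriv (replicate 7 Beta) = path_B 7" "Nontriv [Alpha, Gamma] = path_ABG 0"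
  by (simp_all add: path_B_def path_ABG_def)

lemma alpha_poly_gamma_eq: "alpha_poly_gamma v n = (\<lambda>r. \<Sum>i\<le>n. v i * bpath (path_ABG i) r)"
  by (simp add: alpha_poly_gamma_def path_ABG_def)

lemma alpha_poly_gamma_ABG: "j \<le> n \<Longrightarrow> alpha_poly_gamma v n (path_ABG j) = v j"
  by (simp add: alpha_poly_gamma_eq bpath_def if_distrib sum.delta cong: if_cong)

lemma alpha_poly_gamma_other: "(\<And>i. r \<noteq> path_ABG i) \<Longrightarrow> alpha_poly_gamma v n r = 0"
  by (simp add: alpha_poly_gamma_eq bpath_def)

lemma KQ_alpha_poly_gamma: "alpha_poly_gamma v n \<in> KQ"
  by (rule KQ_intro[of _ "path_ABG ` {..n}"])
    (auto simp: supp_def alpha_poly_gamma_eq bpath_def elim: sum.not_neutral_contains_not_neutral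
      split: if_splits)

lemma relations_KQ: "relations \<subseteq> KQ"
  by (auto simp: relations_def relation_paths KQ_bpath KQ_alpha_poly_gamma)

lemma alpha_poly_gamma_in_rel_ideal:
  assumes "\<And>m. m \<in> {3..6} \<Longrightarrow> 6 * of_nat (fact m) * v m - (9 - 3 ^ m) * v 1 - 2 * (3 ^ m - 3) * v 2 = 0"
  shows "alpha_poly_gamma v 6 \<in> rel_ideal"
  using assms by (auto simp: rel_ideal_def KQ_alpha_poly_gamma short_path_def rel_form_def
      alpha_poly_gamma_ABG intro: alpha_poly_gamma_other)

lemma relations_subset_rel_ideal:
  assumes char: "CHAR('k::field) = 0 \<or> 7 < CHAR('k)"
  shows "(relations :: (path \<Rightarrow> 'k) set) \<subseteq> rel_ideal"
proof -
  have two: "(2::'k) \<noteq> 0"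
    using of_nat_neq_0_le_7[OF char, of 2] by simp
  have "bpath (path_B 7) \<in> (rel_ideal :: (path \<Rightarrow> 'k) set)"
    "bpath (path_ABG 0) \<in> (rel_ideal :: (path \<Rightarrow> 'k) set)"
    by (simp_all add: rel_ideal_def KQ_bpath) (auto simp: short_path_def bpath_def rel_form_def)
  moreover have "alpha_poly_gamma (\<lambda>\<nu>. 1 / of_nat (fact \<nu>)) 6 \<in> (rel_ideal :: (path \<Rightarrow> 'k) set)"
    "alpha_poly_gamma (\<lambda>\<nu>. 3 ^ \<nu> / of_nat (fact \<nu>)) 6 \<in> (rel_ideal :: (path \<Rightarrow> 'k) set)"
    using fact_neq_0[OF char] two by (auto intro!: alpha_poly_gamma_in_rel_ideal simp: field_simps)
  ultimately show ?thesis
    by (simp add: relations_def relation_paths)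
qed

lemma gen_ideal_subset_rel_ideal:
  assumes char: "CHAR('k::field) = 0 \<or> 7 < CHAR('k)"
  shows "gen_ideal (relations :: (path \<Rightarrow> 'k) set) \<subseteq> rel_ideal"
proof
  fix x assume "x \<in> gen_ideal (relations :: (path \<Rightarrow> 'k) set)"
  then show "x \<in> rel_ideal"
    by induction (use relations_subset_rel_ideal[OF char] in
        \<open>auto intro: rel_ideal_zero rel_ideal_add rel_ideal_mult_left rel_ideal_mult_right\<close>)
qed

lemma gen_ideal_KQ: "S \<subseteq> KQ \<Longrightarrow> x \<in> gen_ideal S \<Longrightarrow> x \<in> KQ"
  by (erule gen_ideal.induct) (auto simp: KQ_zero KQ_add KQ_mult)

lemma gen_ideal_smult:
  assumes "S \<subseteq> KQ" "x \<in> gen_ideal S"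
  shows "kq_smult c x \<in> gen_ideal S"
  using gen_ideal.gi_lmult[OF KQ_smult[OF KQ_one] assms(2), of c]
  by (simp add: kq_smult_one_mult gen_ideal_KQ[OF assms])

lemma gen_ideal_sum:
  "finite F \<Longrightarrow> (\<And>p. p \<in> F \<Longrightarrow> g p \<in> gen_ideal S) \<Longrightarrow> (\<lambda>r. \<Sum>p\<in>F. g p r) \<in> gen_ideal S"
proof (induction F rule: finite_induct)
  case empty
  then show ?case using gen_ideal.gi_zero by (simp add: kq_zero_def)
next
  case (insert x F)
  then have "kq_add (g x) (\<lambda>r. \<Sum>p\<in>F. g p r) \<in> gen_ideal S"
    by (intro gen_ideal.gi_add) auto
  with insert show ?case by (simp add: kq_add_def)
qed

lemma bpath_through_B7_in_gen_ideal:
  assumes "valid_path u" "valid_path w" "path_mult (path_B 7) w = Some v" "path_mult u v = Some p"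
  shows "bpath p \<in> gen_ideal relations"
proof -
  have "bpath (path_B 7) \<in> gen_ideal relations"
    by (rule gen_ideal.gi_gen) (simp add: relations_def relation_paths)
  then have "kq_mult (bpath u) (kq_mult (bpath (path_B 7)) (bpath w)) \<in> gen_ideal relations"
    using assms(1,2) by (intro gen_ideal.gi_lmult gen_ideal.gi_rmult KQ_bpath)
  moreover have "valid_path v"
    using assms(2,3) by (rule path_mult_valid[rotated])  simp
  ultimately show ?thesis
    using assms by (simp add: kq_mult_bpath_Some)
qed

lemma long_path_in_gen_ideal:
  assumes "valid_path p" "7 \<le> beta_count p"
  shows "bpath p \<in> gen_ideal relations"
  using assms(1)
proof (cases rule: valid_path_cases)
  case (2 n)
  then show ?thesis
    using assms(2) path_mult_B_B[of 7 "n - 7"]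
    by (intro bpath_through_B7_in_gen_ideal[of "Triv V2" "path_B (n - 7)" "path_B n"]) auto
next
  case (3 n)
  then show ?thesis
    using assms(2) path_mult_AB_B[of "n - 7" 7] path_mult_B_B[of 7 0]
    by (intro bpath_through_B7_in_gen_ideal[of "path_AB (n - 7)" "path_B 0" "path_B 7"]) auto
next
  case (4 n)
  then show ?thesis
    using assms(2) path_mult_B_BG[of 7 "n - 7"]
    by (intro bpath_through_B7_in_gen_ideal[of "Triv V2" "path_BG (n - 7)" "path_BG n"]) auto
next
  case (5 n)
  then show ?thesis
    using assms(2) path_mult_AB_BG[of "n - 7" 7] path_mult_B_BG[of 7 0]
    by (intro bpath_through_B7_in_gen_ideal[of "path_AB (n - 7)" "path_BG 0" "path_BG 7"]) auto
qed (use assms in simp)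

lemma rel_form_eq_0_imp_exp_combination:
  fixes f :: "path \<Rightarrow> 'k::field"
  assumes char: "CHAR('k) = 0 \<or> 7 < CHAR('k)"
    and f: "\<forall>m\<in>{3..6}. rel_form m f = 0" and n: "1 \<le> n" "n \<le> 6"
  defines "y \<equiv> (3 * f (path_ABG 1) - 2 * f (path_ABG 2)) / 2"
    and "z \<equiv> (2 * f (path_ABG 2) - f (path_ABG 1)) / 6"
  shows "of_nat (fact n) * f (path_ABG n) = y + 3 ^ n * z"
proof -
  have six: "(6::'k) \<noteq> 0"
    using of_nat_neq_0_le_7[OF char, of 6] by simp
  have y: "2 * y = 3 * f (path_ABG 1) - 2 * f (path_ABG 2)"
    using of_nat_neq_0_le_7[OF char, of 2] by (simp add: y_def)
  have z: "6 * z = 2 * f (path_ABG 2) - f (path_ABG 1)"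
    using six by (simp add: z_def)
  have "6 * of_nat (fact n) * f (path_ABG n)
        = (9 - 3 ^ n) * f (path_ABG 1) + 2 * (3 ^ n - 3) * f (path_ABG 2)"
  proof (cases "n \<le> 2")
    case True
    with n show ?thesis by (auto simp: le_Suc_eq numeral_2_eq_2)
  next
    case False
    with f n have "rel_form n f = 0" by simp
    then show ?thesis by (simp add: rel_form_def algebra_simps)
  qed
  then have "6 * (of_nat (fact n) * f (path_ABG n)) = 3 * (2 * y) + 3 ^ n * (6 * z)"
    unfolding y z by (simp add: algebra_simps)
  also have "\<dots> = 6 * (y + 3 ^ n * z)"
    by (simp add: algebra_simps)
  finally show ?thesis
    using six by (simp only: mult_cancel_left) simp
qed

lemma long_part_in_gen_ideal:
  assumes "f \<in> KQ"
  shows "(\<lambda>r. if 7 \<le> beta_count r then f r else 0) \<in> gen_ideal relations"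
    (is "?g \<in> _")
proof -
  have gK: "?g \<in> KQ"
    by (intro KQ_intro[of _ "supp f"]) (use assms in \<open>auto simp: supp_def KQ_def\<close>)
  have "(\<lambda>r. \<Sum>p\<in>supp ?g. kq_smult (?g p) (bpath p) r) \<in> gen_ideal relations"
  proof (rule gen_ideal_sum[OF KQ_finite_supp[OF gK]])
    fix p assume "p \<in> supp ?g"
    then have "bpath p \<in> gen_ideal relations"
      using assms by (intro long_path_in_gen_ideal) (auto simp: supp_def KQ_def split: if_splits)
    then show "kq_smult (?g p) (bpath p) \<in> gen_ideal relations"
      by (rule gen_ideal_smult[OF relations_KQ])
  qed
  with KQ_expand[OF gK] show ?thesis
    by (simp add: kq_smult_def)
qed

lemma rel_ideal_decomposition:
  fixes f :: "path \<Rightarrow> 'k::field"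
  assumes char: "CHAR('k) = 0 \<or> 7 < CHAR('k)" and f: "f \<in> rel_ideal"
  defines "y \<equiv> (3 * f (path_ABG 1) - 2 * f (path_ABG 2)) / 2"
    and "z \<equiv> (2 * f (path_ABG 2) - f (path_ABG 1)) / 6"
  defines "x \<equiv> f (path_ABG 0) - y - z"
  shows "f = kq_add (\<lambda>r. if 7 \<le> beta_count r then f r else 0)
    (kq_add (kq_smult x (bpath (path_ABG 0))) (kq_add
      (kq_smult y (alpha_poly_gamma (\<lambda>\<nu>. 1 / of_nat (fact \<nu>)) 6))
      (kq_smult z (alpha_poly_gamma (\<lambda>\<nu>. 3 ^ \<nu> / of_nat (fact \<nu>)) 6))))"
    (is "f = ?g")
proof
  fix r
  from f have fK: "f \<in> KQ" and short: "\<And>p. short_path p \<Longrightarrow> f p = 0"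
    and form: "\<forall>m\<in>{3..6}. rel_form m f = 0"
    by (auto simp: rel_ideal_def)
  consider n where "n \<le> 6" "r = path_ABG n" | "7 \<le> beta_count r"
    | "\<forall>n. r \<noteq> path_ABG n" "beta_count r \<le> 6"
    by (cases "7 \<le> beta_count r"; cases "\<exists>n. r = path_ABG n") auto
  then show "f r = ?g r"
  proof cases
    case 1
    show ?thesis
    proof (cases "n = 0")
      case False
      then have "of_nat (fact n) * f (path_ABG n) = y + 3 ^ n * z"
        using rel_form_eq_0_imp_exp_combination[OF char form, of n] 1 by (simp add: y_def z_def)
      then have "f (path_ABG n) = y * (1 / of_nat (fact n)) + z * (3 ^ n / of_nat (fact n))"
        using fact_neq_0[OF char, of n] 1 by (simp add: field_simps)
      with 1 False show ?thesis
        by (simp add: kq_add_def kq_smult_def bpath_def alpha_poly_gamma_ABG)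
    qed (simp add: 1 x_def kq_add_def kq_smult_def bpath_def alpha_poly_gamma_ABG)
  next
    case 2
    then have "r \<noteq> path_ABG i" if "i \<le> 6" for i
      using that by auto
    with 2 show ?thesis
      by (auto simp: kq_add_def kq_smult_def bpath_def alpha_poly_gamma_eq)
  next
    case 3
    then have "f r = 0"
      using short KQ_valid[OF fK] by (auto simp: short_path_def)
    with 3 show ?thesis
      by (simp add: kq_add_def kq_smult_def bpath_def alpha_poly_gamma_other)
  qed
qed

lemma rel_ideal_subset_gen_ideal:
  assumes char: "CHAR('k::field) = 0 \<or> 7 < CHAR('k)"
  shows "rel_ideal \<subseteq> gen_ideal (relations :: (path \<Rightarrow> 'k) set)"
proof
  fix f :: "path \<Rightarrow> 'k" assume f: "f \<in> rel_ideal"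
  note decomp = rel_ideal_decomposition[OF char f]
  have "f \<in> KQ"
    using f by (simp add: rel_ideal_def)
  then have "kq_add (\<lambda>r. if 7 \<le> beta_count r then f r else 0) (kq_add (kq_smult x (bpath (path_ABG 0)))
      (kq_add (kq_smult y (alpha_poly_gamma (\<lambda>\<nu>. 1 / of_nat (fact \<nu>)) 6))
        (kq_smult z (alpha_poly_gamma (\<lambda>\<nu>. 3 ^ \<nu> / of_nat (fact \<nu>)) 6)))) \<in> gen_ideal relations"
    for x y z :: 'k
    by (intro gen_ideal.gi_add long_part_in_gen_ideal gen_ideal_smult[OF relations_KQ] gen_ideal.gi_gen)
      (simp_all add: relations_def relation_paths)
  then show "f \<in> gen_ideal relations"
    by (rule subst[where P = "\<lambda>g. g \<in> gen_ideal relations", OF decomp[symmetric]])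
qed

lemma gen_ideal_relations:
  assumes char: "CHAR('k::field) = 0 \<or> 7 < CHAR('k)"
  shows "gen_ideal (relations :: (path \<Rightarrow> 'k) set) = rel_ideal"
  using gen_ideal_subset_rel_ideal[OF char] rel_ideal_subset_gen_ideal[OF char] by blast

definition basis_paths :: "path list" where
  "basis_paths =
     [Triv V1, Triv V2, Triv V3,
      path_B 1, path_B 2, path_B 3, path_B 4, path_B 5, path_B 6,
      path_AB 0, path_AB 1, path_AB 2, path_AB 3, path_AB 4, path_AB 5, path_AB 6,
      path_BG 0, path_BG 1, path_BG 2, path_BG 3, path_BG 4, path_BG 5, path_BG 6,
      path_ABG 3, path_ABG 4, path_ABG 5, path_ABG 6]"

lemma length_basis_paths: "length basis_paths = 27"
  by (simp add: basis_paths_def)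

lemma distinct_basis_paths: "distinct basis_paths"
  by (simp add: basis_paths_def)

lemma valid_basis_paths: "p \<in> set basis_paths \<Longrightarrow> valid_path p"
  by (auto simp: basis_paths_def)

lemma basis_paths_ABG: "m \<in> {3..6} \<Longrightarrow> basis_paths ! (m + 20) = path_ABG m"
  by (auto simp: basis_paths_def numeral_eq_Suc le_Suc_eq)

lemma short_path_iff_basis_path: "short_path p \<longleftrightarrow> p \<in> set (take 23 basis_paths)"
proof
  assume p: "short_path p"
  then have "valid_path p" "beta_count p \<le> 6" "\<forall>n. p \<noteq> path_ABG n"
    by (auto simp: short_path_def)
  moreover have "v = V1 \<or> v = V2 \<or> v = V3" for v
    by (cases v) auto
  ultimately show "p \<in> set (take 23 basis_paths)"
    by (cases rule: valid_path_cases) (auto simp: basis_paths_def le_Suc_eq numeral_eq_Suc)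
qed (auto simp: basis_paths_def short_path_def)

lemma basis_comb_at:
  "i < 27 \<Longrightarrow> (\<Sum>j<27. c j * bpath (basis_paths ! j) (basis_paths ! i)) = c i"
  using distinct_basis_paths length_basis_paths
  by (simp add: bpath_def nth_eq_iff_index_eq if_distrib cong: if_cong)

lemma basis_comb_outside:
  "p \<notin> set basis_paths \<Longrightarrow> (\<Sum>j<27. c j * bpath (basis_paths ! j) p) = 0"
  by (rule sum.neutral) (metis bpath_def length_basis_paths lessThan_iff mult_zero_right nth_mem)

lemma KQ_basis_comb: "(\<lambda>p. \<Sum>j<27. c j * bpath (basis_paths ! j) p) \<in> KQ"
  by (rule KQ_intro[of _ "set basis_paths"]) (auto simp: supp_def valid_basis_paths intro: ccontr dest: basis_comb_outside)

lemma rel_form_basis_comb: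
  assumes "m \<in> {3..6}"
  shows "rel_form m (\<lambda>p. \<Sum>j<27. c j * bpath (basis_paths ! j) p) = 6 * of_nat (fact m) * c (m + 20)"
proof -
  have "path_ABG 1 \<notin> set basis_paths" "path_ABG 2 \<notin> set basis_paths"
    by (auto simp: basis_paths_def)
  with assms show ?thesis
    by (simp add: rel_form_def basis_comb_outside basis_comb_at flip: basis_paths_ABG)
qed

lemma basis_comb_in_rel_ideal:
  fixes c :: "nat \<Rightarrow> 'k::field"
  assumes char: "CHAR('k) = 0 \<or> 7 < CHAR('k)"
    and c: "(\<lambda>p. \<Sum>j<27. c j * bpath (basis_paths ! j) p) \<in> rel_ideal" and i: "i < 27"
  shows "c i = 0"
proof (cases "i < 23")
  case True
  then have "short_path (basis_paths ! i)"
    by (simp add: short_path_iff_basis_path in_set_conv_nth length_basis_paths) force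
  with c i show ?thesis
    by (auto simp: rel_ideal_def basis_comb_at)
next
  case False
  with i have m: "i - 20 \<in> {3..6}" "i = i - 20 + 20"
    by auto
  with c have "rel_form (i - 20) (\<lambda>p. \<Sum>j<27. c j * bpath (basis_paths ! j) p) = 0"
    by (simp add: rel_ideal_def)
  then have "6 * of_nat (fact (i - 20)) * c i = 0"
    using rel_form_basis_comb[OF m(1), of c] m(2) by simp
  with fact_neq_0[OF char, of "i - 20"] m of_nat_neq_0_le_7[OF char, of 6] show ?thesis
    by simp
qed

lemma basis_comb_spans:
  fixes f :: "path \<Rightarrow> 'k::field"
  assumes char: "CHAR('k) = 0 \<or> 7 < CHAR('k)" and f: "f \<in> KQ"
  shows "\<exists>c. kq_diff f (\<lambda>p. \<Sum>j<27. c j * bpath (basis_paths ! j) p) \<in> rel_ideal"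
proof -
  define c where "c i = (if i < 23 then f (basis_paths ! i)
      else rel_form (i - 20) f / (6 * of_nat (fact (i - 20))))" for i
  let ?g = "\<lambda>p. \<Sum>j<27. c j * bpath (basis_paths ! j) p"
  have "kq_diff f ?g \<in> rel_ideal"
    unfolding rel_ideal_def
  proof (intro CollectI conjI allI impI ballI)
    show "kq_diff f ?g \<in> KQ"
      by (rule KQ_diff[OF f KQ_basis_comb])
  next
    fix p assume "short_path p"
    then obtain i where "i < 23" "p = basis_paths ! i"
      by (auto simp: short_path_iff_basis_path in_set_conv_nth length_basis_paths)
    then show "kq_diff f ?g p = 0"
      by (simp add: kq_diff_def basis_comb_at c_def)
  next
    fix m :: nat assume m: "m \<in> {3..6}"
    then have "(6 * of_nat (fact m) :: 'k) \<noteq> 0"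
      using fact_neq_0[OF char, of m] of_nat_neq_0_le_7[OF char, of 6] by simp
    with m show "rel_form m (kq_diff f ?g) = 0"
      by (simp add: rel_form_diff rel_form_basis_comb c_def)
  qed
  then show ?thesis
    by blast
qed

lemma quot_dim_rel_ideal:
  assumes char: "CHAR('k::field) = 0 \<or> 7 < CHAR('k)"
  shows "quot_dim_eq (rel_ideal :: (path \<Rightarrow> 'k) set) 27"
  unfolding quot_dim_eq_def
proof (intro exI[of _ "\<lambda>i. bpath (basis_paths ! i)"] conjI allI impI ballI)
  show "bpath (basis_paths ! i) \<in> KQ" if "i < 27" for i
    using that by (simp add: KQ_bpath valid_basis_paths length_basis_paths)
  show "c i = 0" if "(\<lambda>p. \<Sum>i<27. c i * bpath (basis_paths ! i) p) \<in> rel_ideal" "i < 27"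
    for c :: "nat \<Rightarrow> 'k" and i
    using basis_comb_in_rel_ideal[OF char that] .
  show "\<exists>c. kq_diff f (\<lambda>p. \<Sum>i<27. c i * bpath (basis_paths ! i) p) \<in> rel_ideal"
    if "f \<in> KQ" for f :: "path \<Rightarrow> 'k"
    using basis_comb_spans[OF char that] .
qed

lemma path_len_ge_beta_count: "valid_path p \<Longrightarrow> beta_count p \<le> path_len p"
  by (cases rule: valid_path_cases) auto

lemma path_len_short_path: "short_path p \<Longrightarrow> path_len p \<le> 7"
  unfolding short_path_def by (cases p rule: valid_path_cases) auto

lemma admissible_rel_ideal: "admissible_ideal rel_ideal"
  unfolding admissible_ideal_def
proof (intro conjI exI[of _ 9])
  show "rel_ideal \<subseteq> arrow_ideal_pow 2"
  proof
    fix f :: "path \<Rightarrow> 'k::field" assume f: "f \<in> rel_ideal"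
    have "2 \<le> path_len p" if "f p \<noteq> 0" for p
    proof -
      have "valid_path p" "\<not> short_path p"
        using f that by (auto simp: rel_ideal_def KQ_def)
      then have "7 \<le> beta_count p \<or> (\<exists>n. p = path_ABG n)"
        by (auto simp: short_path_def)
      with path_len_ge_beta_count[OF \<open>valid_path p\<close>] show ?thesis
        by auto
    qed
    with f show "f \<in> arrow_ideal_pow 2"
      by (simp add: arrow_ideal_pow_def rel_ideal_def)
  qed
  show "arrow_ideal_pow 9 \<subseteq> rel_ideal"
  proof
    fix f :: "path \<Rightarrow> 'k::field" assume "f \<in> arrow_ideal_pow 9"
    then have "f \<in> KQ" and long: "\<And>p. f p \<noteq> 0 \<Longrightarrow> 9 \<le> path_len p"
      by (auto simp: arrow_ideal_pow_def)
    moreover have "f p = 0" if "short_path p" for p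
      using long[of p] path_len_short_path[OF that] by linarith
    moreover have "f (path_ABG k) = 0" if "k \<le> 6" for k
      using long[of "path_ABG k"] that by fastforce
    ultimately show "f \<in> rel_ideal"
      by (simp add: rel_ideal_def rel_form_def)
  qed
qed simp

section \<open>The quotient algebra\<close>

lemma coeffs_Abs: "f \<in> KQ \<Longrightarrow> coeffs (Abs_path_alg f) = f"
  by (rule Abs_path_alg_inverse)

lemma coeffs_KQ: "coeffs x \<in> KQ"
  using coeffs by blast

lemma coeffs_inject': "coeffs x = coeffs y \<Longrightarrow> x = y"
  by (simp add: coeffs_inject)

lemmas coeffs_ops = plus_path_alg.rep_eq minus_path_alg.rep_eq uminus_path_alg.rep_eq
  times_path_alg.rep_eq zero_path_alg.rep_eq one_path_alg.rep_eq

definition rel_equiv :: "'k::field path_alg \<Rightarrow> 'k path_alg \<Rightarrow> bool" where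
  "rel_equiv x y \<longleftrightarrow> coeffs (x - y) \<in> rel_ideal"

lemma rel_ideal_uminus: "f \<in> rel_ideal \<Longrightarrow> (\<lambda>p. - f p) \<in> rel_ideal"
  using rel_ideal_diff[OF rel_ideal_zero] by (simp add: kq_diff_def kq_zero_def)

lemma rel_equiv_refl [simp]: "rel_equiv x x"
  by (simp add: rel_equiv_def zero_path_alg.rep_eq rel_ideal_zero)

lemma rel_equiv_sym: "rel_equiv x y \<Longrightarrow> rel_equiv y x"
proof -
  have "y - x = - (x - y)"
    by simp
  then show "rel_equiv x y \<Longrightarrow> rel_equiv y x"
    unfolding rel_equiv_def by (simp only: uminus_path_alg.rep_eq rel_ideal_uminus)
qed

lemma rel_equiv_trans: "rel_equiv x y \<Longrightarrow> rel_equiv y z \<Longrightarrow> rel_equiv x z"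
proof -
  have "x - z = (x - y) + (y - z)"
    by simp
  then show "rel_equiv x y \<Longrightarrow> rel_equiv y z \<Longrightarrow> rel_equiv x z"
    unfolding rel_equiv_def by (simp only: plus_path_alg.rep_eq rel_ideal_add)
qed

lemma equivp_rel_equiv: "equivp rel_equiv"
  by (rule equivpI) (auto simp: reflp_def symp_def transp_def intro: rel_equiv_sym rel_equiv_trans)

lemma rel_equiv_ideal:
  "rel_equiv x x' \<Longrightarrow> rel_equiv y y' \<Longrightarrow> rel_equiv (x + y) (x' + y')"
  "rel_equiv x x' \<Longrightarrow> rel_equiv y y' \<Longrightarrow> rel_equiv (x - y) (x' - y')"
  "rel_equiv x x' \<Longrightarrow> rel_equiv (- x) (- x')"
  "rel_equiv x x' \<Longrightarrow> rel_equiv y y' \<Longrightarrow> rel_equiv (x * y) (x' * y')"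
proof -
  assume x: "rel_equiv x x'"
  moreover have "- x - - x' = x' - x"
    by simp
  ultimately show "rel_equiv (- x) (- x')"
    by (metis rel_equiv_def rel_equiv_sym)
  assume y: "rel_equiv y y'"
  have "x + y - (x' + y') = (x - x') + (y - y')" "x - y - (x' - y') = (x - x') - (y - y')"
    "x * y - x' * y' = (x - x') * y + x' * (y - y')"
    by (simp_all add: algebra_simps)
  with x y show "rel_equiv (x + y) (x' + y')" "rel_equiv (x - y) (x' - y')"
    "rel_equiv (x * y) (x' * y')"
    unfolding rel_equiv_def
    by (simp_all only: coeffs_ops rel_ideal_add rel_ideal_diff rel_ideal_mult_left
        rel_ideal_mult_right coeffs_KQ)
qed

quotient_type (overloaded) 'k Lambda = "'k::field path_alg" / rel_equiv
  morphisms rep_Lambda class_of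
  by (rule equivp_rel_equiv)

instantiation Lambda :: (field) ring_1
begin

lift_definition zero_Lambda :: "'a Lambda" is 0 .
lift_definition one_Lambda :: "'a Lambda" is 1 .
lift_definition plus_Lambda :: "'a Lambda \<Rightarrow> 'a Lambda \<Rightarrow> 'a Lambda" is "(+)"
  by (rule rel_equiv_ideal)
lift_definition minus_Lambda :: "'a Lambda \<Rightarrow> 'a Lambda \<Rightarrow> 'a Lambda" is "(-)"
  by (rule rel_equiv_ideal)
lift_definition uminus_Lambda :: "'a Lambda \<Rightarrow> 'a Lambda" is uminus
  by (rule rel_equiv_ideal)
lift_definition times_Lambda :: "'a Lambda \<Rightarrow> 'a Lambda \<Rightarrow> 'a Lambda" is "(*)"
  by (rule rel_equiv_ideal)

instance
proof
  fix a b c :: "'a Lambda"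
  show "a + b + c = a + (b + c)" by transfer (simp add: algebra_simps)
  show "a + b = b + a" by transfer (simp add: algebra_simps)
  show "0 + a = a" by transfer simp
  show "- a + a = 0" by transfer simp
  show "a - b = a + - b" by transfer simp
  show "a * b * c = a * (b * c)" by transfer (simp add: algebra_simps)
  show "(a + b) * c = a * c + b * c" by transfer (simp add: algebra_simps)
  show "a * (b + c) = a * b + a * c" by transfer (simp add: algebra_simps)
  show "1 * a = a" by transfer simp
  show "a * 1 = a" by transfer simp
  have "short_path (Triv V1)"
    by (simp add: short_path_def)
  then show "(0::'a Lambda) \<noteq> 1"
    by transfer (auto simp: rel_equiv_def rel_ideal_def coeffs_ops kq_diff_def kq_zero_def kq_one_def)
qed

end

lemma class_of_eq_iff: "class_of x = class_of y \<longleftrightarrow> coeffs (x - y) \<in> rel_ideal"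
  by (simp add: Lambda.abs_eq_iff rel_equiv_def)

lemma class_of_eq_0_iff: "class_of x = 0 \<longleftrightarrow> coeffs x \<in> rel_ideal"
  by (simp add: zero_Lambda_def class_of_eq_iff)

lemma class_of_rep_Lambda [simp]: "class_of (rep_Lambda y) = y"
  by (rule Quotient3_abs_rep[OF Quotient3_Lambda])

lemma class_of_surj: obtains f where "f \<in> KQ" "y = class_of (Abs_path_alg f)"
  using class_of_rep_Lambda coeffs_KQ coeffs_inverse by metis

lemma class_of_sum: "class_of (\<Sum>i\<in>S. f i) = (\<Sum>i\<in>S. class_of (f i))"
  by (induction S rule: infinite_finite_induct)
    (simp_all add: zero_Lambda_def plus_Lambda.abs_eq[symmetric])

definition scalar :: "'k::field \<Rightarrow> 'k Lambda" where
  "scalar c = class_of (Abs_path_alg (kq_smult c kq_one))"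

lemma coeffs_scalar_mult:
  "coeffs (Abs_path_alg (kq_smult c kq_one) * x) = kq_smult c (coeffs x)"
  "coeffs (x * Abs_path_alg (kq_smult c kq_one)) = kq_smult c (coeffs x)"
  by (simp_all add: times_path_alg.rep_eq coeffs_Abs KQ_smult KQ_one coeffs_KQ
      kq_smult_one_mult kq_mult_smult_one)

lemma scalar_commute: "scalar c * y = y * scalar c"
proof -
  obtain x where y: "y = class_of x"
    by (metis class_of_rep_Lambda)
  have "Abs_path_alg (kq_smult c kq_one) * x = x * Abs_path_alg (kq_smult c kq_one)"
    by (rule coeffs_inject') (simp add: coeffs_scalar_mult)
  with y show ?thesis
    by (simp add: scalar_def times_Lambda.abs_eq)
qed

lemma mult_scalar_commute: "x * (scalar c * y) = scalar c * (x * y)"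
  by (metis mult.assoc scalar_commute)

lemma scalar_add: "scalar (c + d) = scalar c + scalar d"
proof -
  have "Abs_path_alg (kq_smult (c + d) kq_one)
      = Abs_path_alg (kq_smult c kq_one) + (Abs_path_alg (kq_smult d kq_one) :: 'a path_alg)"
    by (rule coeffs_inject')
      (simp add: plus_path_alg.rep_eq coeffs_Abs KQ_smult KQ_one,
       simp add: kq_add_def kq_smult_def distrib_right)
  then show ?thesis
    by (simp add: scalar_def plus_Lambda.abs_eq)
qed

lemma scalar_one [simp]: "scalar 1 = 1"
  by (simp add: scalar_def one_Lambda_def one_path_alg_def kq_smult_def)

lemma scalar_of_nat: "scalar (of_nat n) = of_nat n"
  by (induction n) (simp_all add: scalar_add, simp add: scalar_def zero_Lambda_def zero_path_alg_def
      kq_smult_def kq_zero_def)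

definition path_cls :: "path \<Rightarrow> 'k::field Lambda" where
  "path_cls p = class_of (Abs_path_alg (bpath p))"

lemma path_cls_mult:
  assumes "valid_path p" "valid_path q"
  shows "path_cls p * path_cls q = (case path_mult p q of None \<Rightarrow> 0 | Some r \<Rightarrow> (path_cls r :: 'k::field Lambda))"
proof -
  have eq: "Abs_path_alg (bpath p) * Abs_path_alg (bpath q) = (case path_mult p q of None \<Rightarrow> 0 | Some r \<Rightarrow> (Abs_path_alg (bpath r) :: 'k path_alg))"
    using assms path_mult_valid[OF assms]
    by (intro coeffs_inject')
      (auto simp: times_path_alg.rep_eq zero_path_alg.rep_eq coeffs_Abs KQ_bpath kq_mult_bpath
        split: option.splits)
  show ?thesis
    using eq by (cases "path_mult p q") (simp_all add: path_cls_def times_Lambda.abs_eq zero_Lambda_def)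
qed

lemma class_of_rel_ideal: "f \<in> rel_ideal \<Longrightarrow> class_of (Abs_path_alg f) = 0"
  by (simp add: class_of_eq_0_iff coeffs_Abs rel_ideal_def)

lemma coeffs_sum_scalar_bpath:
  assumes "finite F" "\<And>i. i \<in> F \<Longrightarrow> valid_path (P i)"
  shows "coeffs (\<Sum>i\<in>F. Abs_path_alg (kq_smult (c i) kq_one) * Abs_path_alg (bpath (P i)))
      = (\<lambda>r. \<Sum>i\<in>F. c i * bpath (P i) r)"
  using assms
proof (induction rule: finite_induct)
  case (insert i F)
  then show ?case
    by (simp add: plus_path_alg.rep_eq coeffs_scalar_mult coeffs_Abs KQ_bpath,
        simp add: kq_add_def kq_smult_def)
qed (simp add: zero_path_alg.rep_eq kq_zero_def)

lemma class_of_expand: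
  assumes "f \<in> KQ"
  shows "class_of (Abs_path_alg f) = (\<Sum>p\<in>supp f. scalar (f p) * path_cls p)"
proof -
  have "p \<in> supp f \<Longrightarrow> valid_path p" for p
    using assms by (simp add: supp_def KQ_valid)
  then have "coeffs (Abs_path_alg f)
      = coeffs (\<Sum>p\<in>supp f. Abs_path_alg (kq_smult (f p) kq_one) * Abs_path_alg (bpath p))"
    using KQ_expand[OF assms]
    by (simp add: coeffs_Abs assms coeffs_sum_scalar_bpath[where P = id, simplified] KQ_finite_supp)
  then have "Abs_path_alg f = (\<Sum>p\<in>supp f. Abs_path_alg (kq_smult (f p) kq_one) * Abs_path_alg (bpath p))"
    by (rule coeffs_inject')
  then show ?thesis
    by (simp add: class_of_sum scalar_def path_cls_def times_Lambda.abs_eq)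
qed

definition \<epsilon> :: "vert \<Rightarrow> 'k::field Lambda" where
  "\<epsilon> v = path_cls (Triv v)"
definition \<alpha> :: "'k::field Lambda" where
  "\<alpha> = path_cls (path_AB 0)"
definition \<beta> :: "'k::field Lambda" where
  "\<beta> = path_cls (path_B 1)"
definition \<gamma> :: "'k::field Lambda" where
  "\<gamma> = path_cls (path_BG 0)"

lemma generator_paths: "path_AB 0 = Nontriv [Alpha]" "path_B 1 = Nontriv [Beta]" "path_BG 0 = Nontriv [Gamma]"
  by (simp_all add: path_AB_def path_B_def path_BG_def)

lemma generator_products [simp]:
  "\<epsilon> v * \<epsilon> w = (if v = w then \<epsilon> v else 0)"
  "\<epsilon> v * \<alpha> = (if v = V1 then \<alpha> else 0)" "\<alpha> * \<epsilon> v = (if v = V2 then \<alpha> else 0)"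
  "\<epsilon> v * \<beta> = (if v = V2 then \<beta> else 0)" "\<beta> * \<epsilon> v = (if v = V2 then \<beta> else 0)"
  "\<epsilon> v * \<gamma> = (if v = V2 then \<gamma> else 0)" "\<gamma> * \<epsilon> v = (if v = V3 then \<gamma> else 0)"
  "\<alpha> * \<alpha> = 0" "\<beta> * \<alpha> = 0" "\<gamma> * \<alpha> = 0" "\<gamma> * \<beta> = 0" "\<gamma> * \<gamma> = 0"
  using valid_paths(1)[of 1] valid_paths(2,3)[of 0]
  by (simp_all add: \<epsilon>_def \<alpha>_def \<beta>_def \<gamma>_def generator_paths path_B_def path_cls_mult)

lemma sum_idempotents: "\<epsilon> V1 + \<epsilon> V2 + \<epsilon> V3 = (1 :: 'k::field Lambda)"
proof -
  have "Abs_path_alg (bpath (Triv V1)) + Abs_path_alg (bpath (Triv V2)) + Abs_path_alg (bpath (Triv V3))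
      = (1 :: 'k path_alg)"
  proof (rule coeffs_inject', rule ext)
    fix p :: path
    show "coeffs (Abs_path_alg (bpath (Triv V1)) + Abs_path_alg (bpath (Triv V2))
        + Abs_path_alg (bpath (Triv V3))) p = coeffs (1 :: 'k path_alg) p"
      by (simp add: plus_path_alg.rep_eq one_path_alg.rep_eq coeffs_Abs KQ_bpath)
        (cases p rule: path.exhaust; cases "path_src p"; simp add: kq_add_def bpath_def kq_one_def)
  qed
  then show ?thesis
    by (simp add: \<epsilon>_def path_cls_def plus_Lambda.abs_eq one_Lambda_def)
qed

lemma path_cls_B: "\<epsilon> V2 * \<beta> ^ n = (path_cls (path_B n) :: 'k::field Lambda)"
proof (induction n)
  case 0
  then show ?case by (simp add: \<epsilon>_def path_B_def)
next
  case (Suc n)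
  have "\<epsilon> V2 * \<beta> ^ Suc n = (\<epsilon> V2 * \<beta> ^ n) * (\<beta> :: 'k Lambda)"
    by (simp only: power_Suc2 mult.assoc)
  also have "\<dots> = path_cls (path_B n) * path_cls (path_B 1)"
    using Suc.IH by (simp add: \<beta>_def)
  also have "\<dots> = path_cls (path_B (Suc n))"
    by (simp add: path_cls_mult path_mult_B_B)
  finally show ?case .
qed

lemma power_\<beta>_commute_\<epsilon>: "\<beta> ^ n * \<epsilon> V2 = \<epsilon> V2 * \<beta> ^ n"
  by (rule power_commuting_commutes) simp

lemma path_cls_AB: "\<alpha> * \<beta> ^ n = (path_cls (path_AB n) :: 'k::field Lambda)"
proof -
  have "\<alpha> * \<beta> ^ n = \<alpha> * (\<epsilon> V2 * \<beta> ^ n :: 'k Lambda)"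
    by (simp flip: mult.assoc)
  then show ?thesis
    by (simp add: path_cls_B \<alpha>_def path_cls_mult path_mult_AB_B[of 0, simplified])
qed

lemma path_cls_BG: "\<beta> ^ n * \<gamma> = (path_cls (path_BG n) :: 'k::field Lambda)"
proof -
  have "\<beta> ^ n * \<gamma> = \<epsilon> V2 * \<beta> ^ n * (\<gamma> :: 'k Lambda)"
    by (simp flip: power_\<beta>_commute_\<epsilon> add: mult.assoc)
  then show ?thesis
    by (simp add: path_cls_B \<gamma>_def path_cls_mult path_mult_B_BG[of _ 0, simplified])
qed

lemma path_cls_ABG: "\<alpha> * \<beta> ^ n * \<gamma> = (path_cls (path_ABG n) :: 'k::field Lambda)"
  by (simp add: path_cls_AB \<gamma>_def path_cls_mult path_mult_AB_BG[of _ 0, simplified])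

lemma power_\<beta>_eq_path_cls: "0 < n \<Longrightarrow> \<beta> ^ n = (path_cls (path_B n) :: 'k::field Lambda)"
proof (cases n)
  case (Suc k)
  then have "\<epsilon> V2 * \<beta> ^ n = (\<beta> ^ n :: 'k Lambda)"
    by (simp add: mult.assoc[symmetric])
  then show ?thesis
    by (simp add: path_cls_B)
qed simp

lemma power_\<beta>_eq_0: "7 \<le> n \<Longrightarrow> \<beta> ^ n = (0 :: 'k::field Lambda)"
proof -
  assume n: "7 \<le> n"
  have "path_cls (path_B 7) = (0 :: 'k Lambda)"
    unfolding path_cls_def
    by (rule class_of_rel_ideal) (simp add: rel_ideal_def KQ_bpath,
        simp add: short_path_def bpath_def rel_form_def)
  then have "\<beta> ^ 7 = (0 :: 'k Lambda)"
    by (simp add: power_\<beta>_eq_path_cls)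
  with n show ?thesis
    by (metis le_add_diff_inverse mult_zero_left power_add)
qed

lemma \<alpha>_\<gamma>: "\<alpha> * \<gamma> = (0 :: 'k::field Lambda)"
proof -
  have "path_cls (path_ABG 0) = (0 :: 'k Lambda)"
    unfolding path_cls_def
    by (rule class_of_rel_ideal) (simp add: rel_ideal_def KQ_bpath,
        simp add: short_path_def bpath_def rel_form_def)
  moreover have "\<alpha> * \<gamma> = (path_cls (path_ABG 0) :: 'k Lambda)"
    using path_cls_ABG[of 0] by simp
  ultimately show ?thesis
    by simp
qed

lemma exp_relation_Lambda:
  assumes "alpha_poly_gamma v n \<in> rel_ideal"
  shows "(\<Sum>i\<le>n. scalar (v i) * (\<alpha> * \<beta> ^ i * \<gamma>)) = (0 :: 'k::field Lambda)"
proof -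
  have "coeffs (Abs_path_alg (alpha_poly_gamma v n) :: 'k path_alg)
      = coeffs (\<Sum>i\<le>n. Abs_path_alg (kq_smult (v i) kq_one) * Abs_path_alg (bpath (path_ABG i)))"
    by (simp add: coeffs_Abs KQ_alpha_poly_gamma coeffs_sum_scalar_bpath,
        simp add: alpha_poly_gamma_eq)
  then have "class_of (Abs_path_alg (alpha_poly_gamma v n))
      = (\<Sum>i\<le>n. scalar (v i) * (path_cls (path_ABG i) :: 'k Lambda))"
    by (simp add: coeffs_inject class_of_sum scalar_def path_cls_def times_Lambda.abs_eq)
  with class_of_rel_ideal[OF assms] show ?thesis
    by (simp add: path_cls_ABG)
qed

text \<open>On \<open>\<Lambda>\<close> only the forms with \<open>3 \<le> m \<le> 6\<close> are well defined; the others are set to 0.\<close>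

lift_definition rel_form_L :: "nat \<Rightarrow> 'k::field Lambda \<Rightarrow> 'k"
  is "\<lambda>m x. if m \<in> {3..6} then rel_form m (coeffs x) else 0"
  by (auto simp: rel_equiv_def rel_ideal_def minus_path_alg.rep_eq rel_form_diff)

lemma rel_form_L_add: "rel_form_L m (x + y) = rel_form_L m x + rel_form_L m y"
  by transfer (simp add: plus_path_alg.rep_eq rel_form_add)

lemma rel_form_L_zero [simp]: "rel_form_L m 0 = 0"
  by transfer (simp add: zero_path_alg.rep_eq rel_form_def kq_zero_def)

lemma rel_form_L_sum: "rel_form_L m (\<Sum>i\<in>S. f i) = (\<Sum>i\<in>S. rel_form_L m (f i))"
  by (induction S rule: infinite_finite_induct) (simp_all add: rel_form_L_add)

lemma rel_form_L_scalar: "rel_form_L m (scalar c * x) = c * rel_form_L m x"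
proof -
  obtain y where "x = class_of y"
    by (metis class_of_rep_Lambda)
  then show ?thesis
    by (simp add: scalar_def times_Lambda.abs_eq rel_form_L.abs_eq coeffs_scalar_mult rel_form_smult)
qed

lemma rel_form_L_ABG:
  "m \<in> {3..6} \<Longrightarrow> rel_form_L m (path_cls (path_ABG n)) = rel_form m (bpath (path_ABG n))"
  by (simp add: path_cls_def rel_form_L.abs_eq coeffs_Abs KQ_bpath)

lemma scalar_0 [simp]: "scalar 0 = 0"
  using scalar_add[of 0 0] by simp

lemma path_cls_long:
  assumes "valid_path p" "7 \<le> beta_count p"
  shows "path_cls p = (0 :: 'k::field Lambda)"
proof -
  have "(bpath p :: path \<Rightarrow> 'k) (path_ABG n) = 0" if "n \<le> 6" for n
    using that assms by (auto simp: bpath_def)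
  moreover have "(bpath p :: path \<Rightarrow> 'k) q = 0" if "short_path q" for q
    using that assms by (auto simp: bpath_def short_path_def)
  ultimately have "(bpath p :: path \<Rightarrow> 'k) \<in> rel_ideal"
    using assms by (simp add: rel_ideal_def KQ_bpath rel_form_def)
  then show ?thesis
    unfolding path_cls_def by (rule class_of_rel_ideal)
qed

definition short_paths :: "path set" where
  "short_paths = {p. valid_path p \<and> beta_count p \<le> 6}"

lemma finite_short_paths: "finite short_paths"
proof -
  have "short_paths \<subseteq> range Triv \<union> path_B ` {..6} \<union> path_AB ` {..6} \<union> path_BG ` {..6}
      \<union> path_ABG ` {..6}"
    by (auto simp: short_paths_def elim!: valid_path_cases)
  then show ?thesis
    by (rule finite_subset) (simp add: UNIV_vert)
qed

lemma Lambda_expansion: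
  fixes y :: "'k::field Lambda"
  shows "\<exists>c. y = (\<Sum>p\<in>short_paths. scalar (c p) * path_cls p)"
proof -
  obtain f where f: "f \<in> KQ" "y = class_of (Abs_path_alg f)"
    by (rule class_of_surj)
  have "y = (\<Sum>p\<in>supp f. scalar (f p) * path_cls p)"
    using f by (simp add: class_of_expand)
  also have "\<dots> = (\<Sum>p\<in>supp f \<inter> short_paths. scalar (f p) * path_cls p)"
  proof (rule sum.mono_neutral_right)
    show "finite (supp f)"
      using f by (simp add: KQ_finite_supp)
    show "\<forall>p\<in>supp f - supp f \<inter> short_paths. scalar (f p) * path_cls p = 0"
    proof
      fix p assume "p \<in> supp f - supp f \<inter> short_paths"
      with f have "valid_path p" "7 \<le> beta_count p"
        by (auto simp: supp_def short_paths_def KQ_valid)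
      then show "scalar (f p) * path_cls p = 0"
        by (simp add: path_cls_long)
    qed
  qed auto
  also have "\<dots> = (\<Sum>p\<in>short_paths. scalar (f p) * path_cls p)"
    by (intro sum.mono_neutral_left) (auto simp: finite_short_paths supp_def)
  finally show ?thesis
    by (intro exI[of _ f])
qed

lemma idempotent_mult_path_cls:
  "valid_path p \<Longrightarrow> \<epsilon> v * path_cls p = (if path_tgt p = v then path_cls p else 0)"
  by (cases p) (auto simp: \<epsilon>_def path_cls_mult path_mult_def)

lemma path_cls_mult_idempotent:
  "valid_path p \<Longrightarrow> path_cls p * \<epsilon> v = (if path_src p = v then path_cls p else 0)"
  by (cases p) (auto simp: \<epsilon>_def path_cls_mult path_mult_def)

lemma corner_expansion:
  fixes P :: "nat \<Rightarrow> path"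
  assumes y: "\<epsilon> v * y * \<epsilon> w = y"
    and paths: "{p \<in> short_paths. path_tgt p = v \<and> path_src p = w} = P ` {..6}"
    and inj: "inj_on P {..6}"
  shows "\<exists>a. y = (\<Sum>n\<le>6. scalar (a n) * path_cls (P n))"
proof -
  obtain c where c: "y = (\<Sum>p\<in>short_paths. scalar (c p) * path_cls p)"
    using Lambda_expansion by blast
  have "y = (\<Sum>p\<in>short_paths. scalar (c p) * (\<epsilon> v * path_cls p * \<epsilon> w))"
    by (subst y[symmetric], subst c)
      (simp add: sum_distrib_left sum_distrib_right mult.assoc scalar_commute)
  also have "\<dots> = (\<Sum>p\<in>short_paths.
      if path_tgt p = v \<and> path_src p = w then scalar (c p) * path_cls p else 0)"
    by (intro sum.cong refl) (simp add: idempotent_mult_path_cls path_cls_mult_idempotent short_paths_def)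
  also have "\<dots> = (\<Sum>p\<in>P ` {..6}. scalar (c p) * path_cls p)"
    by (simp add: sum.inter_filter[symmetric] finite_short_paths paths)
  also have "\<dots> = (\<Sum>n\<le>6. scalar (c (P n)) * path_cls (P n))"
    by (simp add: sum.reindex[OF inj])
  finally show ?thesis
    by (intro exI[of _ "\<lambda>n. c (P n)"])
qed

lemma short_paths_between:
  "{p \<in> short_paths. path_tgt p = V1 \<and> path_src p = V2} = path_AB ` {..6}"
  "{p \<in> short_paths. path_tgt p = V2 \<and> path_src p = V2} = path_B ` {..6}"
  "{p \<in> short_paths. path_tgt p = V2 \<and> path_src p = V3} = path_BG ` {..6}"
  by (auto simp: short_paths_def elim!: valid_path_cases)

lemma inj_on_paths: "inj_on path_AB A" "inj_on path_B A" "inj_on path_BG A"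
  by (simp_all add: inj_on_def)

lemma corner_12: "\<epsilon> V1 * y * \<epsilon> V2 = y \<Longrightarrow> \<exists>a. y = (\<Sum>n\<le>6. scalar (a n) * (\<alpha> * \<beta> ^ n))"
  using corner_expansion[OF _ short_paths_between(1) inj_on_paths(1)] by (simp add: path_cls_AB)

lemma corner_22: "\<epsilon> V2 * y * \<epsilon> V2 = y \<Longrightarrow> \<exists>b. y = (\<Sum>n\<le>6. scalar (b n) * (\<epsilon> V2 * \<beta> ^ n))"
  using corner_expansion[OF _ short_paths_between(2) inj_on_paths(2)] by (simp add: path_cls_B)

lemma corner_23: "\<epsilon> V2 * y * \<epsilon> V3 = y \<Longrightarrow> \<exists>c. y = (\<Sum>n\<le>6. scalar (c n) * (\<beta> ^ n * \<gamma>))"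
  using corner_expansion[OF _ short_paths_between(3) inj_on_paths(3)] by (simp add: path_cls_BG)

section \<open>Derivations of the quotient algebra\<close>

lemma inner_on_orthogonal_idempotents:
  fixes e X :: "'i \<Rightarrow> 'a::ring_1"
  assumes "finite I" "(\<Sum>i\<in>I. e i) = 1"
    and idem: "\<And>i j. i \<in> I \<Longrightarrow> j \<in> I \<Longrightarrow> e i * e j = (if i = j then e i else 0)"
    and leibniz: "\<And>i j. i \<in> I \<Longrightarrow> j \<in> I \<Longrightarrow> X i * e j + e i * X j = (if i = j then X i else 0)"
    and j: "j \<in> I"
  defines "a \<equiv> \<Sum>i\<in>I. X i * e i"
  shows "a * e j - e j * a = X j"
proof -
  have right: "a * e j = X j * e j"
    using assms(1) j by (simp add: a_def sum_distrib_right mult.assoc idem if_distrib sum.delta cong: if_cong)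
  have ej: "e j * X i * e i = - (X j * (if i = j then 0 else e i))" if "i \<in> I" for i
  proof (cases "i = j")
    case True
    have "X j * e j + e j * X j * e j = X j * e j"
      using leibniz[OF j j] by (metis distrib_right mult.assoc idem[OF j j] if_True)
    with True show ?thesis by simp
  next
    case False
    then have "e j * X i = - (X j * e i)"
      using leibniz[OF j that] by (simp add: eq_neg_iff_add_eq_0 add.commute)
    with False idem[OF that that] show ?thesis
      by (simp add: mult.assoc)
  qed
  have "e j * a = (\<Sum>i\<in>I. e j * X i * e i)"
    by (simp add: a_def sum_distrib_left mult.assoc)
  also have "\<dots> = - (X j * (\<Sum>i\<in>I. if i = j then 0 else e i))"
    by (simp add: ej sum_negf sum_distrib_left)
  also have "(\<Sum>i\<in>I. if i = j then 0 else e i) = 1 - e j"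
    using assms(1,2) j by (simp add: sum.If_cases Diff_eq[symmetric] sum_diff1)
  finally show ?thesis
    using right by (simp add: algebra_simps)
qed

definition derivation :: "('k::field Lambda \<Rightarrow> 'k Lambda) \<Rightarrow> bool" where
  "derivation D \<longleftrightarrow> (\<forall>x y. D (x + y) = D x + D y) \<and> (\<forall>x y. D (x * y) = D x * y + x * D y)
     \<and> (\<forall>c x. D (scalar c * x) = scalar c * D x)"

context
  fixes D :: "'k::field Lambda \<Rightarrow> 'k Lambda"
  assumes D: "derivation D"
begin

lemma derivation_add: "D (x + y) = D x + D y"
  using D by (simp add: derivation_def)

lemma derivation_mult: "D (x * y) = D x * y + x * D y"
  using D by (simp add: derivation_def)

lemma derivation_scalar: "D (scalar c * x) = scalar c * D x"
  using D unfolding derivation_def by blast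

lemma derivation_1 [simp]: "D 1 = 0"
  using derivation_mult[of 1 1] by simp

lemma derivation_scalar_const [simp]: "D (scalar c) = 0"
  using derivation_scalar[of c 1] by simp

lemma derivation_0 [simp]: "D 0 = 0"
  using derivation_add[of 0 0] by simp

lemma derivation_sum: "D (\<Sum>i\<in>S. f i) = (\<Sum>i\<in>S. D (f i))"
  by (induction S rule: infinite_finite_induct) (simp_all add: derivation_add)

lemma derivation_minus_inner: "derivation (\<lambda>x. D x - (a * x - x * a))"
proof -
  have "a * (scalar c * x) = scalar c * (a * x)" for c x
    by (metis mult.assoc scalar_commute)
  then show ?thesis
    by (simp add: derivation_def derivation_add derivation_mult algebra_simps)
qed

lemma derivation_power:
  assumes "x * D x = D x * x"
  shows "D (x ^ n) = of_nat n * (x ^ (n - 1) * D x)"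
proof (induction n)
  case (Suc n)
  show ?case
  proof (cases n)
    case (Suc k)
    have "D (x ^ Suc n) = D (x ^ n) * x + x ^ n * D x"
      by (simp only: power_Suc2[of x n] derivation_mult)
    also have "D (x ^ n) * x = of_nat n * (x ^ n * D x)"
      using Suc.IH assms Suc by (simp only: mult.assoc power_Suc2[of x k] diff_Suc_1)
    finally show ?thesis
      by (simp add: algebra_simps)
  qed (simp add: derivation_mult)
qed simp

end

lemma finite_vert: "finite (UNIV :: vert set)"
  by (simp add: UNIV_vert)

lemma derivation_inner_on_idempotents:
  assumes D: "derivation D"
  obtains a where "\<And>v. D (\<epsilon> v) = a * \<epsilon> v - \<epsilon> v * a"
proof
  fix v
  show "D (\<epsilon> v) = (\<Sum>w\<in>UNIV. D (\<epsilon> w) * \<epsilon> w) * \<epsilon> v - \<epsilon> v * (\<Sum>w\<in>UNIV. D (\<epsilon> w) * \<epsilon> w)"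
  proof (rule inner_on_orthogonal_idempotents[symmetric])
    show "(\<Sum>w\<in>UNIV. \<epsilon> w) = (1 :: 'a Lambda)"
      using sum_idempotents by (simp add: UNIV_vert add.assoc)
    show "D (\<epsilon> u) * \<epsilon> w + \<epsilon> u * D (\<epsilon> w) = (if u = w then D (\<epsilon> u) else 0)" for u w
      using derivation_mult[OF D, of "\<epsilon> u" "\<epsilon> w"] by (simp add: derivation_0[OF D] split: if_splits)
  qed (simp_all add: finite_vert)
qed

lemma derivation_corner:
  assumes D: "derivation D" and idem: "\<And>v. D (\<epsilon> v) = 0"
  shows "D (\<epsilon> v * x * \<epsilon> w) = \<epsilon> v * D x * \<epsilon> w"
  by (simp add: derivation_mult[OF D] idem)

lemma derivation_eq_0_on_generators:
  assumes D: "derivation D" and idem: "\<And>v. D (\<epsilon> v) = 0"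
    and gens: "D \<alpha> = 0" "D \<beta> = 0" "D \<gamma> = 0"
  shows "D y = 0"
proof -
  have pow: "D (\<beta> ^ n) = 0" for n
    by (induction n) (simp_all add: derivation_mult[OF D] derivation_1[OF D] gens)
  have "D (path_cls p) = 0" if "valid_path p" for p
    using that
  proof (cases rule: valid_path_cases)
    case (1 v) then show ?thesis using idem by (simp add: \<epsilon>_def)
  next
    case (2 n) then show ?thesis by (simp flip: path_cls_B add: derivation_mult[OF D] idem pow)
  next
    case (3 n) then show ?thesis by (simp flip: path_cls_AB add: derivation_mult[OF D] gens pow)
  next
    case (4 n) then show ?thesis by (simp flip: path_cls_BG add: derivation_mult[OF D] gens pow)
  next
    case (5 n) then show ?thesis by (simp flip: path_cls_ABG add: derivation_mult[OF D] gens pow)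
  qed
  moreover obtain c where "y = (\<Sum>p\<in>short_paths. scalar (c p) * path_cls p)"
    using Lambda_expansion by blast
  ultimately show ?thesis
    by (simp add: derivation_sum[OF D] derivation_scalar[OF D] short_paths_def)
qed

definition derived_form :: "(nat \<Rightarrow> 'k::field) \<Rightarrow> (nat \<Rightarrow> 'k) \<Rightarrow> nat \<Rightarrow> nat \<Rightarrow> 'k" where
  "derived_form s b m i = (\<Sum>n\<le>6. s n * rel_form m (bpath (path_ABG (n + i))))
     + of_nat i * (\<Sum>l\<le>6. b l * rel_form m (bpath (path_ABG (i - 1 + l))))"

lemma sum_atMost_6: "(\<Sum>n::nat\<le>6. f n) = f 0 + f 1 + f 2 + f 3 + f 4 + f 5 + (f 6 :: 'a::comm_monoid_add)"
  by (simp add: numeral_eq_Suc atMost_Suc ac_simps)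

lemma of_nat_720_div_fact:
  assumes char: "CHAR('k::field) = 0 \<or> 7 < CHAR('k)" and "i \<le> 6"
  shows "(of_nat (720 div fact i) :: 'k) = 720 * (1 / of_nat (fact i))"
proof -
  have "fact i dvd (fact 6 :: nat)"
    using assms(2) by (rule fact_dvd)
  then have "720 div fact i * fact i = (720 :: nat)"
    by (simp add: fact_numeral)
  then have "of_nat (720 div fact i) * (of_nat (fact i) :: 'k) = 720"
    by (metis of_nat_mult of_nat_numeral)
  with fact_neq_0[OF char, of i] assms(2) show ?thesis
    by (simp add: field_simps)
qed

lemma derived_form_system:
  fixes s b :: "nat \<Rightarrow> 'k::field"
  assumes char: "CHAR('k) = 0 \<or> 7 < CHAR('k)"
    and h0: "derived_form s b 6 7 = 0"
    and h1: "\<And>m. m \<in> {3..6} \<Longrightarrow> derived_form s b m 0 = 0"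
    and h2: "\<And>m. m \<in> {3..6} \<Longrightarrow> (\<Sum>i\<le>6. 1 / of_nat (fact i) * derived_form s b m i) = 0"
    and h3: "\<And>m. m \<in> {3..6} \<Longrightarrow> (\<Sum>i\<le>6. 3 ^ i / of_nat (fact i) * derived_form s b m i) = 0"
  shows "\<forall>n\<in>{1..6}. s n = 0 \<and> b n = 0" "b 0 = 0"
proof -
  have "derived_form s b 6 7 = 30240 * b 0"
    by (simp add: derived_form_def sum_atMost_6 rel_form_def bpath_def fact_numeral)
  moreover have "(30240 :: 'k) \<noteq> 0"
    using smooth_numeral_neq_0[OF char, of 5 3 1 1] by simp
  ultimately show b0: "b 0 = 0"
    using h0 by simp
  have scaled: "(\<Sum>i\<le>6. of_nat (720 div fact i) * v i * derived_form s b m i) = 0"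
    if "m \<in> {3..6}" "v = (\<lambda>i. 1) \<or> v = (\<lambda>i. 3 ^ i)" for m and v :: "nat \<Rightarrow> 'k"
  proof -
    have "(\<Sum>i\<le>6. of_nat (720 div fact i) * v i * derived_form s b m i)
        = 720 * (\<Sum>i\<le>6. v i / of_nat (fact i) * derived_form s b m i)"
      by (simp add: sum_distrib_left of_nat_720_div_fact[OF char] mult.assoc)
    with that h2 h3 show ?thesis
      by auto
  qed
  have "s 1 = 0 \<and> s 2 = 0 \<and> s 3 = 0 \<and> s 4 = 0 \<and> s 5 = 0 \<and> s 6 = 0 \<and>
      b 1 = 0 \<and> b 2 = 0 \<and> b 3 = 0 \<and> b 4 = 0 \<and> b 5 = 0 \<and> b 6 = 0"
    using smooth_numeral_neq_0[OF char, of 13 6 3 0]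
      h1[of 3] h1[of 4] h1[of 5] h1[of 6]
      scaled[of 3 "\<lambda>i. 1"] scaled[of 4 "\<lambda>i. 1"] scaled[of 5 "\<lambda>i. 1"] scaled[of 6 "\<lambda>i. 1"]
      scaled[of 3 "\<lambda>i. 3 ^ i"] scaled[of 4 "\<lambda>i. 3 ^ i"] scaled[of 5 "\<lambda>i. 3 ^ i"]
      scaled[of 6 "\<lambda>i. 3 ^ i"]
    by (simp add: derived_form_def sum_atMost_6 rel_form_def bpath_def fact_numeral b0) algebra
  then show "\<forall>n\<in>{1..6}. s n = 0 \<and> b n = 0"
    by (auto simp: numeral_eq_Suc le_Suc_eq)
qed

lemma rel_form_L_ABG_sum:
  "m \<in> {3..6} \<Longrightarrow> rel_form_L m (\<Sum>n\<le>6. scalar (f n) * (\<alpha> * \<beta> ^ g n * \<gamma>))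
     = (\<Sum>n\<le>6. f n * rel_form m (bpath (path_ABG (g n))))"
  by (simp add: rel_form_L_sum rel_form_L_scalar path_cls_ABG rel_form_L_ABG)

lemma \<beta>_commute_corner_22:
  "\<beta> * (\<Sum>n\<le>6. scalar (b n) * (\<epsilon> V2 * \<beta> ^ n))
     = (\<Sum>n\<le>6. scalar (b n) * (\<epsilon> V2 * \<beta> ^ n)) * (\<beta> :: 'k::field Lambda)"
proof -
  have "\<beta> * (\<epsilon> V2 * \<beta> ^ n) = \<epsilon> V2 * \<beta> ^ n * (\<beta> :: 'k Lambda)" for n
    by (simp add: mult.assoc power_commutes) (simp add: mult.assoc[symmetric])
  then show ?thesis
    by (simp add: sum_distrib_left sum_distrib_right mult_scalar_commute mult.assoc)
qed

lemma derivation_ABG: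
  fixes D :: "'k::field Lambda \<Rightarrow> 'k Lambda"
  assumes D: "derivation D"
    and A: "D \<alpha> = (\<Sum>n\<le>6. scalar (a n) * (\<alpha> * \<beta> ^ n))"
    and B: "D \<beta> = (\<Sum>n\<le>6. scalar (b n) * (\<epsilon> V2 * \<beta> ^ n))"
    and C: "D \<gamma> = (\<Sum>n\<le>6. scalar (c n) * (\<beta> ^ n * \<gamma>))"
    and m: "m \<in> {3..6}"
  shows "rel_form_L m (D (\<alpha> * \<beta> ^ i * \<gamma>)) = derived_form (\<lambda>n. a n + c n) b m i"
proof -
  have "\<beta> * D \<beta> = D \<beta> * \<beta>"
    unfolding B by (rule \<beta>_commute_corner_22)
  then have "D (\<beta> ^ i) = of_nat i * (\<beta> ^ (i - 1) * D \<beta>)"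
    by (rule derivation_power[OF D])
  then have "D (\<alpha> * \<beta> ^ i * \<gamma>) = D \<alpha> * \<beta> ^ i * \<gamma> + scalar (of_nat i) * (\<alpha> * \<beta> ^ (i - 1) * D \<beta> * \<gamma>)
      + \<alpha> * \<beta> ^ i * D \<gamma>"
    by (simp add: derivation_mult[OF D] scalar_of_nat algebra_simps mult_of_nat_commute)
  moreover have "D \<alpha> * \<beta> ^ i * \<gamma> = (\<Sum>n\<le>6. scalar (a n) * (\<alpha> * \<beta> ^ (n + i) * \<gamma>))"
    by (simp add: A sum_distrib_right mult.assoc power_add)
  moreover have "\<alpha> * \<beta> ^ (i - 1) * D \<beta> * \<gamma>
      = (\<Sum>l\<le>6. scalar (b l) * (\<alpha> * \<beta> ^ (i - 1 + l) * \<gamma>))"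
    by (simp add: B sum_distrib_left sum_distrib_right mult_scalar_commute mult.assoc power_add)
      (simp add: power_\<beta>_commute_\<epsilon> mult.assoc[symmetric])
  moreover have "\<alpha> * \<beta> ^ i * (\<beta> ^ n * \<gamma>) = \<alpha> * \<beta> ^ (n + i) * (\<gamma> :: 'k Lambda)" for n
    by (metis add.commute mult.assoc power_add)
  then have "\<alpha> * \<beta> ^ i * D \<gamma> = (\<Sum>n\<le>6. scalar (c n) * (\<alpha> * \<beta> ^ (n + i) * \<gamma>))"
    by (simp add: C sum_distrib_left mult_scalar_commute)
  ultimately show ?thesis
    using m by (simp add: rel_form_L_add rel_form_L_scalar rel_form_L_ABG_sum derived_form_def
        distrib_right sum.distrib)
qed

lemma corner_coefficients:
  fixes D :: "'k::field Lambda \<Rightarrow> 'k Lambda"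
  assumes char: "CHAR('k) = 0 \<or> 7 < CHAR('k)" and D: "derivation D"
    and A: "D \<alpha> = (\<Sum>n\<le>6. scalar (a n) * (\<alpha> * \<beta> ^ n))"
    and B: "D \<beta> = (\<Sum>n\<le>6. scalar (b n) * (\<epsilon> V2 * \<beta> ^ n))"
    and C: "D \<gamma> = (\<Sum>n\<le>6. scalar (c n) * (\<beta> ^ n * \<gamma>))"
  shows "\<forall>n\<in>{1..6}. a n + c n = 0 \<and> b n = 0" "b 0 = 0"
proof -
  define s where "s n = a n + c n" for n
  note form = derivation_ABG[OF D A B C, folded s_def]
  have h0: "derived_form s b 6 7 = 0"
    using form[of 6 7] by (simp add: power_\<beta>_eq_0 derivation_0[OF D])
  have h1: "derived_form s b m 0 = 0" if "m \<in> {3..6}" for m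
    using form[OF that, of 0] by (simp add: \<alpha>_\<gamma> derivation_0[OF D])
  have relation: "(\<Sum>i\<le>6. v i * derived_form s b m i) = 0"
    if "alpha_poly_gamma v 6 \<in> rel_ideal" "m \<in> {3..6}" for v m
  proof -
    have "(\<Sum>i\<le>6. scalar (v i) * D (\<alpha> * \<beta> ^ i * \<gamma>)) = 0"
      using arg_cong[OF exp_relation_Lambda[OF that(1)], of D]
      by (simp add: derivation_sum[OF D] derivation_scalar[OF D] derivation_0[OF D])
    then have "rel_form_L m (\<Sum>i\<le>6. scalar (v i) * D (\<alpha> * \<beta> ^ i * \<gamma>)) = 0"
      by simp
    then show ?thesis
      using form[OF that(2)] by (simp add: rel_form_L_sum rel_form_L_scalar)
  qed
  have "(\<Sum>i\<le>6. 1 / of_nat (fact i) * derived_form s b m i) = 0"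
    and "(\<Sum>i\<le>6. 3 ^ i / of_nat (fact i) * derived_form s b m i) = 0" if "m \<in> {3..6}" for m
    using relations_subset_rel_ideal[OF char] that relation[of "\<lambda>\<nu>. 1 / of_nat (fact \<nu>)" m]
      relation[of "\<lambda>\<nu>. 3 ^ \<nu> / of_nat (fact \<nu>)" m]
    by (simp_all add: relations_def)
  from derived_form_system[OF char h0 h1 this] show "\<forall>n\<in>{1..6}. a n + c n = 0 \<and> b n = 0" "b 0 = 0"
    by (simp_all add: s_def)
qed

lemma corrector_products:
  fixes s0 :: "'k::field" and c :: "nat \<Rightarrow> 'k"
  defines "a \<equiv> scalar s0 * \<epsilon> V1 + (\<Sum>n\<le>6. scalar (c n) * path_cls (path_B n))"
  shows "a * \<epsilon> v = \<epsilon> v * a" "a * \<beta> = \<beta> * a" "a * \<alpha> = scalar s0 * \<alpha>"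
    "\<alpha> * a = (\<Sum>n\<le>6. scalar (c n) * (\<alpha> * \<beta> ^ n))"
    "a * \<gamma> = (\<Sum>n\<le>6. scalar (c n) * (\<beta> ^ n * \<gamma>))" "\<gamma> * a = 0"
proof -
  have cls: "\<alpha> = path_cls (path_AB 0)" "\<beta> = path_cls (path_B 1)" "\<gamma> = path_cls (path_BG 0)"
    by (simp_all add: \<alpha>_def \<beta>_def \<gamma>_def)
  show "a * \<epsilon> v = \<epsilon> v * a"
    by (simp add: a_def distrib_left distrib_right sum_distrib_left sum_distrib_right mult.assoc
        mult_scalar_commute idempotent_mult_path_cls path_cls_mult_idempotent)
  show "a * \<beta> = \<beta> * a"
    unfolding cls
    by (simp add: a_def distrib_left distrib_right sum_distrib_left sum_distrib_right mult.assoc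
        mult_scalar_commute path_cls_mult path_mult_B_B add.commute idempotent_mult_path_cls
        path_cls_mult_idempotent)
  show "a * \<alpha> = scalar s0 * \<alpha>"
    unfolding cls
    by (simp add: a_def distrib_right sum_distrib_right mult.assoc idempotent_mult_path_cls
        path_cls_mult path_mult_None)
  show "\<alpha> * a = (\<Sum>n\<le>6. scalar (c n) * (\<alpha> * \<beta> ^ n))"
    unfolding path_cls_AB unfolding cls
    by (simp add: a_def distrib_left sum_distrib_left mult_scalar_commute path_cls_mult_idempotent
        path_cls_mult path_mult_AB_B)
  show "a * \<gamma> = (\<Sum>n\<le>6. scalar (c n) * (\<beta> ^ n * \<gamma>))"
    unfolding path_cls_BG unfolding cls
    by (simp add: a_def distrib_right sum_distrib_right mult.assoc idempotent_mult_path_cls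
        path_cls_mult path_mult_B_BG path_mult_None)
  show "\<gamma> * a = 0"
    unfolding cls
    by (simp add: a_def distrib_left sum_distrib_left mult_scalar_commute path_cls_mult_idempotent
        path_cls_mult path_mult_None)
qed

lemma normalized_derivation_inner:
  fixes D :: "'k::field Lambda \<Rightarrow> 'k Lambda"
  assumes char: "CHAR('k) = 0 \<or> 7 < CHAR('k)" and D: "derivation D" and idem: "\<And>v. D (\<epsilon> v) = 0"
  shows "\<exists>a. \<forall>x. D x = a * x - x * a"
proof -
  have corners: "\<epsilon> V1 * D \<alpha> * \<epsilon> V2 = D \<alpha>" "\<epsilon> V2 * D \<beta> * \<epsilon> V2 = D \<beta>"
    "\<epsilon> V2 * D \<gamma> * \<epsilon> V3 = D \<gamma>"
    using derivation_corner[OF D idem, of V1 \<alpha> V2] derivation_corner[OF D idem, of V2 \<beta> V2]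
      derivation_corner[OF D idem, of V2 \<gamma> V3]
    by (simp_all add: mult.assoc)
  obtain a where A: "D \<alpha> = (\<Sum>n\<le>6. scalar (a n) * (\<alpha> * \<beta> ^ n))"
    using corner_12[OF corners(1)] by blast
  obtain b where B: "D \<beta> = (\<Sum>n\<le>6. scalar (b n) * (\<epsilon> V2 * \<beta> ^ n))"
    using corner_22[OF corners(2)] by blast
  obtain c where C: "D \<gamma> = (\<Sum>n\<le>6. scalar (c n) * (\<beta> ^ n * \<gamma>))"
    using corner_23[OF corners(3)] by blast
  note coeffs = corner_coefficients[OF char D A B C]
  define a' where "a' = scalar (a 0 + c 0) * \<epsilon> V1 + (\<Sum>n\<le>6. scalar (c n) * path_cls (path_B n))"
  note a' = corrector_products[of "a 0 + c 0" c, folded a'_def]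
  define D' where "D' x = D x - (a' * x - x * a')" for x
  have D': "derivation D'"
    unfolding D'_def by (rule derivation_minus_inner[OF D])
  have "D' y = 0" for y
  proof (rule derivation_eq_0_on_generators[OF D'])
    show "D' (\<epsilon> v) = 0" for v
      by (simp add: D'_def idem a')
    have "b n = 0" if "n \<le> 6" for n
      using coeffs that by (cases "n = 0") auto
    then show "D' \<beta> = 0"
      by (simp add: D'_def B a')
    have "(\<Sum>n\<le>6. scalar (a n) * (\<alpha> * \<beta> ^ n)) + (\<Sum>n\<le>6. scalar (c n) * (\<alpha> * \<beta> ^ n))
        = (\<Sum>n\<le>6. scalar (a n + c n) * (\<alpha> * \<beta> ^ n))"
      by (simp add: scalar_add distrib_right sum.distrib)
    also have "\<dots> = scalar (a 0 + c 0) * \<alpha>"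
      using coeffs by (simp add: sum_atMost_6)
    finally show "D' \<alpha> = 0"
      by (simp add: D'_def A a' eq_diff_eq)
    show "D' \<gamma> = 0"
      by (simp add: D'_def C a')
  qed
  then show ?thesis
    by (auto simp: D'_def)
qed

lemma derivation_Lambda_inner:
  fixes D :: "'k::field Lambda \<Rightarrow> 'k Lambda"
  assumes char: "CHAR('k) = 0 \<or> 7 < CHAR('k)" and D: "derivation D"
  shows "\<exists>a. \<forall>x. D x = a * x - x * a"
proof -
  obtain a1 where a1: "\<And>v. D (\<epsilon> v) = a1 * \<epsilon> v - \<epsilon> v * a1"
    using derivation_inner_on_idempotents[OF D] by blast
  have "derivation (\<lambda>x. D x - (a1 * x - x * a1))"
    by (rule derivation_minus_inner[OF D])
  with normalized_derivation_inner[OF char] a1 obtain a2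
    where "\<And>x. D x - (a1 * x - x * a1) = a2 * x - x * a2"
    by fastforce
  then have "D x = (a1 + a2) * x - x * (a1 + a2)" for x
    by (simp add: algebra_simps eq_diff_eq)
  then show ?thesis
    by blast
qed

section \<open>Derivations given on representatives\<close>

lemma class_of_Abs_eq_iff:
  "f \<in> KQ \<Longrightarrow> g \<in> KQ \<Longrightarrow> class_of (Abs_path_alg f) = class_of (Abs_path_alg g) \<longleftrightarrow> kq_diff f g \<in> rel_ideal"
  by (simp add: class_of_eq_iff minus_path_alg.rep_eq coeffs_Abs)

lemma rel_ideal_coeffs_rep_Lambda: "kq_diff (coeffs (rep_Lambda (class_of x))) (coeffs x) \<in> rel_ideal"
  using Quotient3_rep_abs[OF Quotient3_Lambda rel_equiv_refl[of x]]
  by (simp add: rel_equiv_def minus_path_alg.rep_eq)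

lemma Abs_path_alg_add:
  "f \<in> KQ \<Longrightarrow> g \<in> KQ \<Longrightarrow> Abs_path_alg f + Abs_path_alg g = Abs_path_alg (kq_add f g)"
  by (rule coeffs_inject') (simp add: plus_path_alg.rep_eq coeffs_Abs KQ_add)

lemma Abs_path_alg_mult:
  "f \<in> KQ \<Longrightarrow> g \<in> KQ \<Longrightarrow> Abs_path_alg f * Abs_path_alg g = Abs_path_alg (kq_mult f g)"
  by (rule coeffs_inject') (simp add: times_path_alg.rep_eq coeffs_Abs KQ_mult)

lemma Abs_path_alg_scalar:
  "f \<in> KQ \<Longrightarrow> Abs_path_alg (kq_smult c kq_one) * Abs_path_alg f = Abs_path_alg (kq_smult c f)"
  by (simp add: Abs_path_alg_mult KQ_smult KQ_one kq_smult_one_mult)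

definition induced_derivation :: "((path \<Rightarrow> 'k) \<Rightarrow> (path \<Rightarrow> 'k)) \<Rightarrow> 'k::field Lambda \<Rightarrow> 'k Lambda" where
  "induced_derivation d y = class_of (Abs_path_alg (d (coeffs (rep_Lambda y))))"

context
  fixes d :: "(path \<Rightarrow> 'k::field) \<Rightarrow> (path \<Rightarrow> 'k)"
  assumes d: "quot_derivation rel_ideal d"
begin

lemma quot_derivation_KQ: "x \<in> KQ \<Longrightarrow> d x \<in> KQ"
  and quot_derivation_cong: "x \<in> KQ \<Longrightarrow> y \<in> KQ \<Longrightarrow> kq_diff x y \<in> rel_ideal
      \<Longrightarrow> kq_diff (d x) (d y) \<in> rel_ideal"
  and quot_derivation_add: "x \<in> KQ \<Longrightarrow> y \<in> KQ \<Longrightarrow>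
      kq_diff (d (kq_add x y)) (kq_add (d x) (d y)) \<in> rel_ideal"
  and quot_derivation_smult: "x \<in> KQ \<Longrightarrow> kq_diff (d (kq_smult c x)) (kq_smult c (d x)) \<in> rel_ideal"
  and quot_derivation_mult: "x \<in> KQ \<Longrightarrow> y \<in> KQ \<Longrightarrow>
      kq_diff (d (kq_mult x y)) (kq_add (kq_mult (d x) y) (kq_mult x (d y))) \<in> rel_ideal"
  using d by (simp_all add: quot_derivation_def)

lemma induced_derivation_class_of:
  "induced_derivation d (class_of x) = class_of (Abs_path_alg (d (coeffs x)))"
  using rel_ideal_coeffs_rep_Lambda[of x]
  by (simp add: induced_derivation_def class_of_Abs_eq_iff quot_derivation_KQ coeffs_KQ
      quot_derivation_cong)

lemma induced_derivation_Abs: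
  "f \<in> KQ \<Longrightarrow> induced_derivation d (class_of (Abs_path_alg f)) = class_of (Abs_path_alg (d f))"
  by (simp add: induced_derivation_class_of coeffs_Abs)

lemma derivation_induced_derivation: "derivation (induced_derivation d)"
  unfolding derivation_def
proof (intro conjI allI)
  fix x y :: "'k Lambda"
  obtain f g where fg: "f \<in> KQ" "x = class_of (Abs_path_alg f)" "g \<in> KQ" "y = class_of (Abs_path_alg g)"
    by (metis class_of_surj)
  then show "induced_derivation d (x + y) = induced_derivation d x + induced_derivation d y"
    by (simp add: plus_Lambda.abs_eq Abs_path_alg_add KQ_add induced_derivation_Abs
        class_of_Abs_eq_iff quot_derivation_KQ quot_derivation_add)
  show "induced_derivation d (x * y) = induced_derivation d x * y + x * induced_derivation d y"
    using fg
    by (simp add: plus_Lambda.abs_eq times_Lambda.abs_eq Abs_path_alg_add Abs_path_alg_mult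
        KQ_add KQ_mult induced_derivation_Abs class_of_Abs_eq_iff quot_derivation_KQ
        quot_derivation_mult)
next
  fix c and x :: "'k Lambda"
  obtain f where f: "f \<in> KQ" "x = class_of (Abs_path_alg f)"
    by (metis class_of_surj)
  then show "induced_derivation d (scalar c * x) = scalar c * induced_derivation d x"
    by (simp add: scalar_def times_Lambda.abs_eq Abs_path_alg_scalar KQ_smult induced_derivation_Abs
        class_of_Abs_eq_iff quot_derivation_KQ quot_derivation_smult)
qed

lemma quot_inner_if_induced_inner:
  assumes a: "\<And>y. induced_derivation d y = a * y - y * a"
  shows "quot_inner rel_ideal d"
  unfolding quot_inner_def
proof (intro bexI ballI)
  define f where "f = coeffs (rep_Lambda a)"
  show f: "f \<in> KQ"
    by (simp add: f_def coeffs_KQ)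
  have a_eq: "a = class_of (Abs_path_alg f)"
    by (simp add: f_def coeffs_inverse)
  fix x :: "path \<Rightarrow> 'k" assume x: "x \<in> KQ"
  have "class_of (Abs_path_alg (d x)) = class_of (Abs_path_alg (kq_diff (kq_mult f x) (kq_mult x f)))"
    using a[of "class_of (Abs_path_alg x)"] x f
    by (simp add: a_eq induced_derivation_Abs times_Lambda.abs_eq minus_Lambda.abs_eq
        Abs_path_alg_mult minus_path_alg_def coeffs_Abs KQ_mult)
  then show "kq_diff (d x) (kq_diff (kq_mult f x) (kq_mult x f)) \<in> rel_ideal"
    using x f by (simp add: class_of_Abs_eq_iff quot_derivation_KQ KQ_diff KQ_mult)
qed

end

lemma HH1_vanishes_rel_ideal:
  assumes char: "CHAR('k::field) = 0 \<or> 7 < CHAR('k)"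
  shows "HH1_vanishes (rel_ideal :: (path \<Rightarrow> 'k) set)"
  unfolding HH1_vanishes_def
proof (intro allI impI)
  fix d :: "(path \<Rightarrow> 'k) \<Rightarrow> (path \<Rightarrow> 'k)"
  assume d: "quot_derivation rel_ideal d"
  obtain a where "\<forall>y. induced_derivation d y = a * y - y * a"
    using derivation_Lambda_inner[OF char derivation_induced_derivation[OF d]] by blast
  then show "quot_inner rel_ideal d"
    by (intro quot_inner_if_induced_inner[OF d]) blast
qed

theorem mainTheorem15:
  fixes I :: "(path \<Rightarrow> 'k::field) set"
  assumes char: "CHAR('k) = 0 \<or> CHAR('k) > 7"
    and I_def: "I = gen_ideal
        { bpath (Nontriv (replicate 7 Beta)),
          bpath (Nontriv [Alpha, Gamma]),
          alpha_poly_gamma (\<lambda>\<nu>. 1 / of_nat (fact \<nu>)) 6,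
          alpha_poly_gamma (\<lambda>\<nu>. 3 ^ \<nu> / of_nat (fact \<nu>)) 6 }"
  shows "quot_dim_eq I 27 \<and> admissible_ideal I
         \<and> arr_src Beta = arr_tgt Beta \<and> HH1_vanishes I"
proof -
  have "I = rel_ideal"
    using I_def gen_ideal_relations[OF char] by (simp add: relations_def)
  then show ?thesis
    using quot_dim_rel_ideal[OF char] admissible_rel_ideal HH1_vanishes_rel_ideal[OF char] by simp
qed

end
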